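(* Fix integers $d\geq1$ and, for $1\leq i\leq d$, $k_i\geq1$, a connected graph $F_i$ on $[k_i]$, and bounded measurable $\phi_i:\mathcal{D}_{k_i}\to\mathbb{R}$, $\psi_i:[0,1]^{k_i}\to\mathbb{R}$; fix a graphon $\kappa$ and a constant $B$. For each $n\geq1$ let $U=(U_1,\dots,U_n)$ be independent $[0,1]$-valued random variables and $(Y_{vw})_{1\leq v<w\leq n}$ random variables, conditionally independent given $U$, with $\mathbb{E}[Y_{vw}\mid U]=\kappa(U_v,U_w)$ and $|Y_{vw}|\leq B$ (laws may depend on $n$), and define $X_{i,a}$ and $N^{i,a}_j$ as in the context. Let $m\geq2$ and $1\leq i,i_1,\dots,i_m\leq d$. Then there exists a constant $C>0$ independent of $n$ such that for all $n$ $$\Bigg|\mathbb{E}\sum_{a\in\mathcal{I}^n_{k_i}}\sum_{b_1\in N^{i,a}_{i_1}}\cdots\sum_{b_m\in N^{i,a}_{i_m}}X_{i,a}X_{i_1,b_1}\cdots X_{i_m,b_m}\Bigg|\leq Cn^{-(m-1)/2}.$$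
   Context: A graphon is a symmetric measurable $\kappa:[0,1]^2\to[0,1]$. $\mathcal{I}^n_k=\{(a_1,\dots,a_k)\in\mathbb{N}^k:1\leq a_1<\cdots<a_k\leq n\}$, $\mathcal{D}_k=\{x\in[0,1]^k:x_1\leq\cdots\leq x_k\}$, $a/n=(a_1/n,\dots,a_k/n)$, $U_a=(U_{a_1},\dots,U_{a_k})$. For $a\in\mathcal{I}^n_{k_i}$: $T_{i,a}=\prod_{\{v,w\}\in E(F_i),v<w}(Y_{a_va_w}-\kappa(U_{a_v},U_{a_w}))$ if $k_i\geq2$, $T_{i,a}=1$ if $k_i=1$; $\Phi_{i,a}=\psi_i(U_{a_1})-\mathbb{E}\psi_i(U_{a_1})$ if $k_i=1$, $\Phi_{i,a}=\psi_i(U_a)$ if $k_i\geq2$; $X_{i,a}=\binom{n}{k_i}^{-1/2}\phi_i(a/n)\Phi_{i,a}T_{i,a}$. For $1\leq j\leq d$, $N^{i,a}_j=\{b\in\mathcal{I}^n_{k_j}:|\{a_1,\dots,a_{k_i}\}\cap\{b_1,\dots,b_{k_j}\}|\geq\min(2,k_i)\}$. *)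

theory Defs
  imports "HOL-Probability.Probability"
begin

text \<open>Graphon: symmetric measurable kappa from [0,1]^2 to [0,1] (given as a Borel
  measurable function on the reals whose restriction to [0,1]^2 is the graphon).\<close>
definition graphon :: "(real \<Rightarrow> real \<Rightarrow> real) \<Rightarrow> bool" where
  "graphon \<kappa> \<longleftrightarrow> (\<lambda>(x, y). \<kappa> x y) \<in> borel_measurable borel
     \<and> (\<forall>x\<in>{0..1}. \<forall>y\<in>{0..1}. \<kappa> x y = \<kappa> y x \<and> \<kappa> x y \<in> {0..1})"

definition graph_on :: "nat \<Rightarrow> (nat \<times> nat) set \<Rightarrow> bool" where
  "graph_on k E \<longleftrightarrow> E \<subseteq> {(v, w). 1 \<le> v \<and> v < w \<and> w \<le> k}"

definition connected_graph_on :: "nat \<Rightarrow> (nat \<times> nat) set \<Rightarrow> bool" where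
  "connected_graph_on k E \<longleftrightarrow> graph_on k E \<and>
     (\<forall>v\<in>{1..k}. \<forall>w\<in>{1..k}. (v, w) \<in> (E \<union> E\<inverse>)\<^sup>*)"

definition cube :: "nat \<Rightarrow> (nat \<Rightarrow> real) set" where
  "cube k = PiE {1..k} (\<lambda>_. {0..1})"

definition Dsimplex :: "nat \<Rightarrow> (nat \<Rightarrow> real) set" where
  "Dsimplex k = {x \<in> cube k. \<forall>j\<in>{1..k}. \<forall>l\<in>{1..k}. j \<le> l \<longrightarrow> x j \<le> x l}"

definition Iset :: "nat \<Rightarrow> nat \<Rightarrow> (nat \<Rightarrow> nat) set" where
  "Iset n k = {a \<in> PiE {1..k} (\<lambda>_. {1..n}). \<forall>j\<in>{1..k}. \<forall>l\<in>{1..k}. j < l \<longrightarrow> a j < a l}"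

definition scaled :: "nat \<Rightarrow> nat \<Rightarrow> (nat \<Rightarrow> nat) \<Rightarrow> (nat \<Rightarrow> real)" where
  "scaled n k a = (\<lambda>j\<in>{1..k}. real (a j) / real n)"

definition Uvec :: "nat \<Rightarrow> (nat \<Rightarrow> 'o \<Rightarrow> real) \<Rightarrow> (nat \<Rightarrow> nat) \<Rightarrow> 'o \<Rightarrow> (nat \<Rightarrow> real)" where
  "Uvec k U a \<omega> = (\<lambda>j\<in>{1..k}. U (a j) \<omega>)"

definition sigmaU :: "'o measure \<Rightarrow> nat \<Rightarrow> (nat \<Rightarrow> 'o \<Rightarrow> real) \<Rightarrow> 'o measure" where
  "sigmaU M n U = sigma (space M) {U i -` A \<inter> space M | i A. i \<in> {1..n} \<and> A \<in> sets borel}"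

definition cond_indep_vars :: "'o measure \<Rightarrow> 'o measure \<Rightarrow> ('i \<Rightarrow> 'o \<Rightarrow> real) \<Rightarrow> 'i set \<Rightarrow> bool" where
  "cond_indep_vars M F X J \<longleftrightarrow>
     (\<forall>K A. finite K \<and> K \<subseteq> J \<and> (\<forall>j\<in>K. A j \<in> sets borel) \<longrightarrow>
        (AE \<omega> in M. real_cond_exp M F (indicator (\<Inter>j\<in>K. X j -` A j \<inter> space M)) \<omega>
            = (\<Prod>j\<in>K. real_cond_exp M F (indicator (X j -` A j \<inter> space M)) \<omega>)))"

definition Tterm :: "nat \<Rightarrow> (nat \<times> nat) set \<Rightarrow> (real \<Rightarrow> real \<Rightarrow> real)
    \<Rightarrow> (nat \<Rightarrow> 'o \<Rightarrow> real) \<Rightarrow> (nat \<Rightarrow> nat \<Rightarrow> 'o \<Rightarrow> real) \<Rightarrow> (nat \<Rightarrow> nat) \<Rightarrow> 'o \<Rightarrow> real" where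
  "Tterm k E \<kappa> U Y a \<omega> =
     (if k \<ge> 2 then (\<Prod>(v, w)\<in>E. Y (a v) (a w) \<omega> - \<kappa> (U (a v) \<omega>) (U (a w) \<omega>)) else 1)"

definition Phiterm :: "'o measure \<Rightarrow> nat \<Rightarrow> ((nat \<Rightarrow> real) \<Rightarrow> real)
    \<Rightarrow> (nat \<Rightarrow> 'o \<Rightarrow> real) \<Rightarrow> (nat \<Rightarrow> nat) \<Rightarrow> 'o \<Rightarrow> real" where
  "Phiterm M k \<psi> U a \<omega> =
     (if k = 1 then \<psi> (Uvec 1 U a \<omega>) - (\<integral>\<omega>'. \<psi> (Uvec 1 U a \<omega>') \<partial>M)
      else \<psi> (Uvec k U a \<omega>))"

definition Xterm :: "'o measure \<Rightarrow> nat \<Rightarrow> nat \<Rightarrow> (nat \<times> nat) set \<Rightarrow> ((nat \<Rightarrow> real) \<Rightarrow> real)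
    \<Rightarrow> ((nat \<Rightarrow> real) \<Rightarrow> real) \<Rightarrow> (real \<Rightarrow> real \<Rightarrow> real)
    \<Rightarrow> (nat \<Rightarrow> 'o \<Rightarrow> real) \<Rightarrow> (nat \<Rightarrow> nat \<Rightarrow> 'o \<Rightarrow> real) \<Rightarrow> (nat \<Rightarrow> nat) \<Rightarrow> 'o \<Rightarrow> real" where
  "Xterm M n k E \<phi> \<psi> \<kappa> U Y a \<omega> =
     (1 / sqrt (real (n choose k))) * \<phi> (scaled n k a) * Phiterm M k \<psi> U a \<omega> * Tterm k E \<kappa> U Y a \<omega>"

definition Nset :: "nat \<Rightarrow> nat \<Rightarrow> nat \<Rightarrow> (nat \<Rightarrow> nat) \<Rightarrow> (nat \<Rightarrow> nat) set" where
  "Nset n ki kj a = {b \<in> Iset n kj. card (a ` {1..ki} \<inter> b ` {1..kj}) \<ge> min 2 ki}"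

end

theory Submission
  imports Defs
begin

text \<open>Expanding the sum, the expectation becomes a sum over configurations
  \<open>(a, b\<^sub>1, \<dots>, b\<^sub>m)\<close> of expectations of products of the \<open>X\<close>-terms. Every \<open>T\<close>-factor is a
  product of centred edge variables \<open>Y\<^sub>v\<^sub>w - \<kappa>(U\<^sub>v, U\<^sub>w)\<close>, which given \<open>U\<close> are conditionally
  independent with mean zero; hence a configuration in which some edge occurs in only one factor
  contributes nothing. In the remaining configurations every edge is used at least twice, and
  since the graphs \<open>F\<^sub>j\<close> are connected and each \<open>b\<^sub>l\<close> meets \<open>a\<close> in at least \<open>min 2 k\<^sub>i\<close> points, such a
  configuration has at most \<open>(S + 1 - m) / 2\<close> distinct vertices, where
  \<open>S = k\<^sub>i + k\<^sub>i\<^sub>1 + \<dots> + k\<^sub>i\<^sub>m\<close>. There are \<open>O(n\<^bsup>(S + 1 - m) / 2\<^esup>)\<close> of them and each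
  contributes \<open>O(n\<^bsup>-S/2\<^esup>)\<close>.\<close>

section \<open>Connected families of blocks\<close>

definition block_rel :: "'i set \<Rightarrow> ('i \<Rightarrow> 'a set) \<Rightarrow> ('a \<times> 'a) set" where
  "block_rel L S = {(x, y). \<exists>l\<in>L. x \<in> S l \<and> y \<in> S l}"

lemma block_rel_rtrancl_in_Union:
  assumes "(x, y) \<in> (block_rel L S)\<^sup>*" "y \<in> \<Union>(S ` L)"
  shows "x \<in> \<Union>(S ` L)"
  using assms by (cases rule: converse_rtranclE) (auto simp: block_rel_def)

lemma connected_blocks_meet:
  assumes "p \<in> L" "q \<in> L" "p \<noteq> q" "\<And>l. l \<in> L \<Longrightarrow> S l \<noteq> {}"
    and conn: "\<And>x y. x \<in> \<Union>(S ` L) \<Longrightarrow> y \<in> \<Union>(S ` L) \<Longrightarrow> (x, y) \<in> (block_rel L S)\<^sup>*"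
  obtains p' q' where "p' \<in> L" "q' \<in> L" "p' \<noteq> q'" "S p' \<inter> S q' \<noteq> {}"
proof -
  obtain x y where x: "x \<in> S p" and y: "y \<in> S q" using assms(1,2,4) by blast
  have "(x, y) \<in> (block_rel L S)\<^sup>*" using conn x y assms(1,2) by blast
  then have "y \<in> S p \<or> (\<exists>p'\<in>L. \<exists>q'\<in>L. p' \<noteq> q' \<and> S p' \<inter> S q' \<noteq> {})"
  proof (induction rule: rtrancl_induct)
    case (step z z')
    then obtain l where l: "l \<in> L" "z \<in> S l" "z' \<in> S l" unfolding block_rel_def by blast
    show ?case
    proof (cases "z \<in> S p \<and> l \<noteq> p")
      case True
      then have "S p \<inter> S l \<noteq> {}" using l by blast
      then show ?thesis using True l(1) assms(1) by (intro disjI2 bexI[of _ p] bexI[of _ l]) auto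
    qed (use step.IH l in blast)
  qed (use x in simp)
  then show thesis
  proof
    assume "y \<in> S p"
    then have "S p \<inter> S q \<noteq> {}" using y by blast
    then show thesis using that assms(1-3) by blast
  qed (use that in blast)
qed

lemma block_rel_merge:
  assumes "p \<in> L" "q \<in> L" "p \<noteq> q"
  shows "block_rel L S \<subseteq> block_rel (L - {q}) (S(p := S p \<union> S q))"
proof
  fix z assume "z \<in> block_rel L S"
  then obtain x y l where z: "z = (x, y)" "l \<in> L" "x \<in> S l" "y \<in> S l" unfolding block_rel_def by blast
  show "z \<in> block_rel (L - {q}) (S(p := S p \<union> S q))"
  proof (cases "l = p \<or> l = q")
    case True
    then have "x \<in> (S(p := S p \<union> S q)) p" "y \<in> (S(p := S p \<union> S q)) p" using z by auto
    then show ?thesis using z assms unfolding block_rel_def by blast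
  next
    case False
    then have "l \<in> L - {q}" "(S(p := S p \<union> S q)) l = S l" using z by auto
    then show ?thesis using z unfolding block_rel_def by auto
  qed
qed

lemma sum_card_merge_blocks:
  assumes L: "finite L" "p \<in> L" "q \<in> L" "p \<noteq> q"
    and S: "finite (S p)" "finite (S q)" "S p \<inter> S q \<noteq> {}"
  shows "(\<Sum>l\<in>L - {q}. card ((S(p := S p \<union> S q)) l)) + 1 \<le> (\<Sum>l\<in>L. card (S l))"
proof -
  have "(\<Sum>l\<in>L - {q}. card ((S(p := S p \<union> S q)) l)) = card (S p \<union> S q) + (\<Sum>l\<in>L - {q} - {p}. card (S l))"
    using L by (simp add: sum.remove)
  moreover have "(\<Sum>l\<in>L. card (S l)) = card (S q) + card (S p) + (\<Sum>l\<in>L - {q} - {p}. card (S l))"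
    using L sum.remove[of L q "\<lambda>l. card (S l)"] sum.remove[of "L - {q}" p "\<lambda>l. card (S l)"] by simp
  moreover have "card (S p \<inter> S q) \<ge> 1" using S by (simp add: Suc_leI card_gt_0_iff)
  ultimately show ?thesis using card_Un_Int[OF S(1,2)] by linarith
qed

text \<open>Merging two overlapping blocks keeps the family connected and lowers both sides by one.\<close>
lemma card_Union_connected_blocks:
  assumes "finite L" "L \<noteq> {}" "\<And>l. l \<in> L \<Longrightarrow> finite (S l) \<and> S l \<noteq> {}"
    "\<And>x y. x \<in> \<Union>(S ` L) \<Longrightarrow> y \<in> \<Union>(S ` L) \<Longrightarrow> (x, y) \<in> (block_rel L S)\<^sup>*"
  shows "card (\<Union>(S ` L)) + card L \<le> (\<Sum>l\<in>L. card (S l)) + 1"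
  using assms
proof (induction "card L" arbitrary: L S rule: less_induct)
  case less
  show ?case
  proof (cases "card L = 1")
    case True
    then obtain l where "L = {l}" using card_1_singletonE by blast
    then show ?thesis by simp
  next
    case False
    have "0 < card L" using less.prems(1,2) by (simp add: card_gt_0_iff)
    then have "\<not> card L \<le> Suc 0" using False by linarith
    then obtain p0 q0 where "p0 \<in> L" "q0 \<in> L" "p0 \<noteq> q0"
      using card_le_Suc0_iff_eq[OF less.prems(1)] by blast
    then obtain p q where pq: "p \<in> L" "q \<in> L" "p \<noteq> q" "S p \<inter> S q \<noteq> {}"
      using connected_blocks_meet[of p0 L q0 S] less.prems by blast
    define L' where "L' = L - {q}"
    define S' where "S' = S(p := S p \<union> S q)"
    have L': "card L = Suc (card L')" "finite L'" "p \<in> L'"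
      unfolding L'_def using card_Suc_Diff1[OF less.prems(1) pq(2)] pq less.prems(1) by auto
    have U: "\<Union>(S' ` L') = \<Union>(S ` L)"
      unfolding L'_def S'_def using pq by auto
    have "card (\<Union>(S' ` L')) + card L' \<le> (\<Sum>l\<in>L'. card (S' l)) + 1"
    proof (rule less.hyps[of L' S'])
      show "(x, y) \<in> (block_rel L' S')\<^sup>*" if "x \<in> \<Union>(S' ` L')" "y \<in> \<Union>(S' ` L')" for x y
      proof -
        have "(x, y) \<in> (block_rel L S)\<^sup>*" using less.prems(4) that unfolding U by blast
        then show ?thesis using rtrancl_mono[OF block_rel_merge[OF pq(1-3)]] unfolding L'_def S'_def by blast
      qed
      show "finite (S' l) \<and> S' l \<noteq> {}" if "l \<in> L'" for l
        using that less.prems(3) pq(1,2) unfolding L'_def S'_def by auto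
    qed (use L' in auto)
    moreover have "(\<Sum>l\<in>L'. card (S' l)) + 1 \<le> (\<Sum>l\<in>L. card (S l))"
      unfolding L'_def S'_def using pq less.prems(1,3) by (intro sum_card_merge_blocks) auto
    ultimately show ?thesis using L'(1) U by simp
  qed
qed

lemma card_le_sum_card_Int_connected:
  assumes "finite L" "L \<noteq> {}" "finite A" "\<And>l. l \<in> L \<Longrightarrow> A \<inter> B l \<noteq> {}"
    and conn: "\<And>x y. x \<in> A \<Longrightarrow> y \<in> A \<Longrightarrow> (x, y) \<in> (block_rel L (\<lambda>l. A \<inter> B l))\<^sup>*"
  shows "card A + card L \<le> (\<Sum>l\<in>L. card (A \<inter> B l)) + 1"
proof -
  have "(\<Union>l\<in>L. A \<inter> B l) = A"
  proof
    obtain l0 y where "l0 \<in> L" "y \<in> A \<inter> B l0" using assms(2,4) by blast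
    then show "A \<subseteq> (\<Union>l\<in>L. A \<inter> B l)"
      using block_rel_rtrancl_in_Union[OF conn] by blast
  qed auto
  then show ?thesis
    using card_Union_connected_blocks[of L "\<lambda>l. A \<inter> B l"] assms by simp
qed

lemma card_Un_doubly_covered_le:
  fixes A :: "'a set" and B :: "'i \<Rightarrow> 'a set"
  assumes fin: "finite A" "finite L" "\<And>l. l \<in> L \<Longrightarrow> finite (B l)"
    and overlaps: "card A + card L \<le> (\<Sum>l\<in>L. card (A \<inter> B l)) + 1"
    and twice: "\<And>x. x \<in> (\<Union>l\<in>L. B l) - A \<Longrightarrow> 2 \<le> card {l\<in>L. x \<in> B l}"
  shows "2 * card (A \<union> (\<Union>l\<in>L. B l)) + card L \<le> card A + (\<Sum>l\<in>L. card (B l)) + 1"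
proof -
  define R where "R = (\<Union>l\<in>L. B l) - A"
  have finR: "finite R" unfolding R_def using fin by auto
  have "2 * card R \<le> (\<Sum>x\<in>R. card {l\<in>L. x \<in> B l})"
    using sum_mono[of R "\<lambda>_. 2" "\<lambda>x. card {l\<in>L. x \<in> B l}"] twice by (simp add: R_def)
  also have "\<dots> = (\<Sum>l\<in>L. card {x\<in>R. x \<in> B l})"
    by (rule sum_multicount_gen[symmetric]) (use fin finR in auto)
  also have "\<dots> = (\<Sum>l\<in>L. card (B l - A))"
    by (rule sum.cong) (auto simp: R_def intro: arg_cong[where f = card])
  finally have R: "2 * card R \<le> (\<Sum>l\<in>L. card (B l - A))" .
  have "(\<Sum>l\<in>L. card (B l)) = (\<Sum>l\<in>L. card (B l - A)) + (\<Sum>l\<in>L. card (A \<inter> B l))"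
  proof -
    have "card (B l) = card (B l - A) + card (A \<inter> B l)" if "l \<in> L" for l
      using card_Int_Diff[of "B l" A] fin that by (simp add: Int_commute)
    then show ?thesis by (simp add: sum.distrib[symmetric])
  qed
  moreover have "card (A \<union> (\<Union>l\<in>L. B l)) = card A + card R"
    unfolding R_def using fin by (subst card_Un_disjoint[symmetric]) (auto intro: arg_cong[where f = card])
  ultimately show ?thesis using R overlaps by linarith
qed

section \<open>Index tuples and graphs\<close>

lemma Iset_inj_on: "a \<in> Iset n k \<Longrightarrow> inj_on a {1..k}"
  unfolding Iset_def inj_on_def by (metis (no_types, lifting) linorder_neqE_nat mem_Collect_eq less_irrefl)

lemma Iset_range: "a \<in> Iset n k \<Longrightarrow> j \<in> {1..k} \<Longrightarrow> a j \<in> {1..n}"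
  unfolding Iset_def by auto

lemma Iset_subset_PiE: "Iset n k \<subseteq> PiE {1..k} (\<lambda>_. {1..n})"
  unfolding Iset_def by auto

lemma finite_Iset: "finite (Iset n k)"
  using Iset_subset_PiE by (rule finite_subset) (simp add: finite_PiE)

lemma card_image_Iset: "a \<in> Iset n k \<Longrightarrow> card (a ` {1..k}) = k"
  using card_image[OF Iset_inj_on[of a n k]] by simp

lemma Iset_le: "a \<in> Iset n k \<Longrightarrow> k \<le> n"
  using card_mono[of "{1..n}" "a ` {1..k}"] card_image_Iset[of a n k] Iset_range[of a n k]
  by (simp add: image_subset_iff)

lemma Iset_edge_eq:
  assumes a: "a \<in> Iset n k" and E: "graph_on k E" "e \<in> E" "e' \<in> E"
    and eq: "a (fst e') = a (fst e)" "a (snd e') = a (snd e)"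
  shows "e' = e"
proof -
  have ends: "fst e \<in> {1..k}" "snd e \<in> {1..k}" "fst e' \<in> {1..k}" "snd e' \<in> {1..k}"
    using E unfolding graph_on_def by auto
  have "fst e' = fst e" "snd e' = snd e"
    using inj_onD[OF Iset_inj_on[OF a] eq(1)] inj_onD[OF Iset_inj_on[OF a] eq(2)] ends by auto
  then show ?thesis by (simp add: prod_eq_iff)
qed

lemma scaled_in_Dsimplex: "a \<in> Iset n k \<Longrightarrow> scaled n k a \<in> Dsimplex k"
proof -
  assume a: "a \<in> Iset n k"
  then have "\<And>j l. j \<in> {1..k} \<Longrightarrow> l \<in> {1..k} \<Longrightarrow> j \<le> l \<Longrightarrow> a j \<le> a l"
    unfolding Iset_def by (metis (no_types, lifting) le_eq_less_or_eq mem_Collect_eq)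
  then show ?thesis
    using Iset_range[OF a] unfolding Dsimplex_def cube_def scaled_def
    by (auto simp: PiE_iff divide_le_eq_1 intro: divide_right_mono)
qed

lemma restrict_zero_in_Dsimplex: "(\<lambda>j\<in>{1..k}. 0) \<in> Dsimplex k"
  unfolding Dsimplex_def cube_def by auto

lemma restrict_zero_in_cube: "(\<lambda>j\<in>{1..k}. 0) \<in> cube k"
  unfolding cube_def by auto

lemma graph_on_edge_in_range: "graph_on k E \<Longrightarrow> e \<in> E \<Longrightarrow> fst e \<in> {1..k} \<and> snd e \<in> {1..k}"
  unfolding graph_on_def by auto

lemma connected_graph_on_incident_edge:
  assumes c: "connected_graph_on k E" and k: "2 \<le> k" and j: "j \<in> {1..k}"
  obtains e where "e \<in> E" "j = fst e \<or> j = snd e"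
proof -
  obtain j' where j': "j' \<in> {1..k}" "j' \<noteq> j"
  proof (cases "j = 1")
    case True
    then show thesis using k by (intro that[of 2]) auto
  next
    case False
    then show thesis using k by (intro that[of 1]) auto
  qed
  have "(j, j') \<in> (E \<union> E\<inverse>)\<^sup>*" using c j j' unfolding connected_graph_on_def by blast
  then show thesis
  proof (cases rule: converse_rtranclE)
    case (step y)
    then show thesis using that by auto
  qed (use j' in simp)
qed

section \<open>Configurations of index tuples\<close>

definition config_vertices :: "'f set \<Rightarrow> ('f \<Rightarrow> nat) \<Rightarrow> ('f \<Rightarrow> nat \<Rightarrow> nat) \<Rightarrow> nat set" where
  "config_vertices FI kf c = (\<Union>f\<in>FI. c f ` {1..kf f})"

definition edges_repeated :: "'f set \<Rightarrow> ('f \<Rightarrow> (nat \<times> nat) set) \<Rightarrow> ('f \<Rightarrow> nat \<Rightarrow> nat) \<Rightarrow> bool" where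
  "edges_repeated FI E c \<longleftrightarrow> (\<forall>f\<in>FI. \<forall>e\<in>E f. \<exists>f'\<in>FI. \<exists>e'\<in>E f'. (f', e') \<noteq> (f, e) \<and>
     c f' (fst e') = c f (fst e) \<and> c f' (snd e') = c f (snd e))"

text \<open>A star configuration \<open>c\<close> encodes the tuples \<open>(a, b\<^sub>1, \<dots>, b\<^sub>m)\<close> of the theorem as
  \<open>c 0 = a\<close> and \<open>c l = b\<^sub>l\<close>.\<close>
definition star_configs :: "nat \<Rightarrow> nat \<Rightarrow> (nat \<Rightarrow> nat) \<Rightarrow> (nat \<Rightarrow> nat \<Rightarrow> nat) set" where
  "star_configs n m kf =
     {c \<in> PiE {0..m} (\<lambda>f. Iset n (kf f)). \<forall>l\<in>{1..m}. c l \<in> Nset n (kf 0) (kf l) (c 0)}"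

lemma star_configs_Iset: "c \<in> star_configs n m kf \<Longrightarrow> f \<in> {0..m} \<Longrightarrow> c f \<in> Iset n (kf f)"
  unfolding star_configs_def by blast

lemma star_configs_overlap:
  "c \<in> star_configs n m kf \<Longrightarrow> l \<in> {1..m} \<Longrightarrow>
    min 2 (kf 0) \<le> card (c 0 ` {1..kf 0} \<inter> c l ` {1..kf l})"
  unfolding star_configs_def Nset_def by blast

lemma not_edges_repeated_single_edge:
  assumes "\<not> edges_repeated FI E c"
  shows "\<exists>f0\<in>FI. \<exists>e0\<in>E f0. \<forall>f\<in>FI. \<forall>e\<in>E f.
    (f, e) \<noteq> (f0, e0) \<longrightarrow> (c f (fst e), c f (snd e)) \<noteq> (c f0 (fst e0), c f0 (snd e0))"
  using assms unfolding edges_repeated_def by auto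

lemma edges_repeated_other_factor:
  assumes "edges_repeated FI E c" and c: "\<And>f. f \<in> FI \<Longrightarrow> c f \<in> Iset n (kf f)"
    and E: "\<And>f. f \<in> FI \<Longrightarrow> graph_on (kf f) (E f)" and "f \<in> FI" "e \<in> E f"
  obtains f' where "f' \<in> FI" "f' \<noteq> f" "c f (fst e) \<in> c f' ` {1..kf f'}" "c f (snd e) \<in> c f' ` {1..kf f'}"
proof -
  obtain f' e' where f': "f' \<in> FI" "e' \<in> E f'" "(f', e') \<noteq> (f, e)"
    and eq: "c f' (fst e') = c f (fst e)" "c f' (snd e') = c f (snd e)"
    using assms(1,4,5) unfolding edges_repeated_def by blast
  have "f' \<noteq> f"
  proof
    assume "f' = f"
    then have "e' = e" using Iset_edge_eq[OF c E assms(5)] assms(4) f'(2) eq by simp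
    then show False using f'(3) \<open>f' = f\<close> by simp
  qed
  moreover have "c f (fst e) \<in> c f' ` {1..kf f'}" "c f (snd e) \<in> c f' ` {1..kf f'}"
    using graph_on_edge_in_range[OF E[OF f'(1)] f'(2)] eq by (metis image_eqI)+
  ultimately show thesis using that f'(1) by blast
qed

lemma star_config_sum_overlaps_ge:
  assumes c: "c \<in> star_configs n m kf" and k0: "1 \<le> kf 0" and m: "1 \<le> m"
    and E: "connected_graph_on (kf 0) E"
    and cover: "\<And>e. e \<in> E \<Longrightarrow>
      \<exists>l\<in>{1..m}. c 0 (fst e) \<in> c l ` {1..kf l} \<and> c 0 (snd e) \<in> c l ` {1..kf l}"
  shows "kf 0 + m \<le> (\<Sum>l\<in>{1..m}. card (c 0 ` {1..kf 0} \<inter> c l ` {1..kf l})) + 1"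
proof -
  let ?A = "c 0 ` {1..kf 0}" and ?B = "\<lambda>l. c l ` {1..kf l}"
  let ?R = "block_rel {1..m} (\<lambda>l. ?A \<inter> ?B l)"
  have edge: "(c 0 u, c 0 u') \<in> ?R" if uu': "(u, u') \<in> E \<union> E\<inverse>" for u u'
  proof -
    obtain e where e: "e \<in> E" "(u, u') = e \<or> (u', u) = e" using uu' by blast
    obtain l where "l \<in> {1..m}" "c 0 (fst e) \<in> ?B l" "c 0 (snd e) \<in> ?B l" using cover[OF e(1)] by blast
    moreover have "c 0 (fst e) \<in> ?A" "c 0 (snd e) \<in> ?A"
      using graph_on_edge_in_range[of "kf 0" E e] E e(1) by (auto simp: connected_graph_on_def)
    ultimately have "(c 0 (fst e), c 0 (snd e)) \<in> ?R" "(c 0 (snd e), c 0 (fst e)) \<in> ?R"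
      unfolding block_rel_def by blast+
    then show ?thesis using e(2) by auto
  qed
  have "card ?A + card {1..m} \<le> (\<Sum>l\<in>{1..m}. card (?A \<inter> ?B l)) + 1"
  proof (rule card_le_sum_card_Int_connected)
    show "?A \<inter> ?B l \<noteq> {}" if "l \<in> {1..m}" for l
      using star_configs_overlap[OF c that] k0 by auto
    fix x y assume "x \<in> ?A" "y \<in> ?A"
    then obtain v w where vw: "v \<in> {1..kf 0}" "w \<in> {1..kf 0}" "x = c 0 v" "y = c 0 w" by blast
    have "(v, w) \<in> (E \<union> E\<inverse>)\<^sup>*" using E vw unfolding connected_graph_on_def by blast
    then have "(c 0 v, c 0 w) \<in> ?R\<^sup>*"
    proof (induction rule: rtrancl_induct)
      case (step u u')
      then show ?case using edge by (blast intro: rtrancl_into_rtrancl)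
    qed simp
    then show "(x, y) \<in> ?R\<^sup>*" using vw by simp
  qed (use m in auto)
  moreover have "card ?A = kf 0" using card_image_Iset star_configs_Iset[OF c, of 0] by simp
  ultimately show ?thesis using m by simp
qed

lemma star_config_vertex_twice:
  assumes c: "c \<in> star_configs n m kf" and k0: "1 \<le> kf 0"
    and E: "\<And>l. l \<in> {1..m} \<Longrightarrow> connected_graph_on (kf l) (E l)"
    and cover: "\<And>l e. l \<in> {1..m} \<Longrightarrow> e \<in> E l \<Longrightarrow> \<exists>f\<in>{0..m} - {l}.
      c l (fst e) \<in> c f ` {1..kf f} \<and> c l (snd e) \<in> c f ` {1..kf f}"
    and x: "x \<in> (\<Union>l\<in>{1..m}. c l ` {1..kf l}) - c 0 ` {1..kf 0}"
  shows "2 \<le> card {l\<in>{1..m}. x \<in> c l ` {1..kf l}}"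
proof -
  obtain l j where l: "l \<in> {1..m}" "j \<in> {1..kf l}" "x = c l j" using x by blast
  have "2 \<le> kf l"
  proof (rule ccontr)
    assume "\<not> 2 \<le> kf l"
    then have "{1..kf l} = {j}" using l(2) by auto
    then have "c l ` {1..kf l} = {x}" using l(3) by simp
    then show False using star_configs_overlap[OF c l(1)] k0 x by auto
  qed
  then obtain e where "e \<in> E l" "j = fst e \<or> j = snd e"
    using connected_graph_on_incident_edge[OF E[OF l(1)] _ l(2)] by blast
  then obtain f where f: "f \<in> {0..m} - {l}" "x \<in> c f ` {1..kf f}" using cover[OF l(1)] l(3) by blast
  then have "f \<in> {1..m}" using x by (cases "f = 0") auto
  then have "{l, f} \<subseteq> {l\<in>{1..m}. x \<in> c l ` {1..kf l}}" using l f by auto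
  then have "card {l, f} \<le> card {l\<in>{1..m}. x \<in> c l ` {1..kf l}}" by (intro card_mono) auto
  then show ?thesis using f by simp
qed

lemma card_config_vertices_star_le:
  assumes c: "c \<in> star_configs n m kf" and m: "1 \<le> m" and k0: "1 \<le> kf 0"
    and E: "\<And>f. f \<in> {0..m} \<Longrightarrow> connected_graph_on (kf f) (E f)"
    and rep: "edges_repeated {0..m} E c"
  shows "2 * card (config_vertices {0..m} kf c) + m \<le> (\<Sum>f\<in>{0..m}. kf f) + 1"
proof -
  have cI: "\<And>f. f \<in> {0..m} \<Longrightarrow> c f \<in> Iset n (kf f)" using star_configs_Iset[OF c] .
  have G: "\<And>f. f \<in> {0..m} \<Longrightarrow> graph_on (kf f) (E f)" using E by (auto simp: connected_graph_on_def)
  have cover: "\<exists>f'\<in>{0..m} - {f}. c f (fst e) \<in> c f' ` {1..kf f'} \<and> c f (snd e) \<in> c f' ` {1..kf f'}"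
    if "f \<in> {0..m}" "e \<in> E f" for f e
    using edges_repeated_other_factor[OF rep cI G that] by blast
  have ins: "{0..m} = insert 0 {1..m}" by auto
  have "2 * card (c 0 ` {1..kf 0} \<union> (\<Union>l\<in>{1..m}. c l ` {1..kf l})) + card {1..m}
      \<le> card (c 0 ` {1..kf 0}) + (\<Sum>l\<in>{1..m}. card (c l ` {1..kf l})) + 1"
  proof (rule card_Un_doubly_covered_le)
    show "card (c 0 ` {1..kf 0}) + card {1..m} \<le> (\<Sum>l\<in>{1..m}. card (c 0 ` {1..kf 0} \<inter> c l ` {1..kf l})) + 1"
      using star_config_sum_overlaps_ge[OF c k0 m E] cover[of 0] card_image_Iset[OF cI[of 0]] by fastforce
    show "2 \<le> card {l\<in>{1..m}. x \<in> c l ` {1..kf l}}" if "x \<in> (\<Union>l\<in>{1..m}. c l ` {1..kf l}) - c 0 ` {1..kf 0}" for x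
      by (rule star_config_vertex_twice[OF c k0 E _ that]) (use cover in auto)
  qed auto
  moreover have "(\<Sum>l\<in>{1..m}. card (c l ` {1..kf l})) = (\<Sum>l\<in>{1..m}. kf l)"
    using cI card_image_Iset by (intro sum.cong) auto
  ultimately show ?thesis
    using card_image_Iset[OF cI[of 0]] by (simp add: config_vertices_def ins)
qed

lemma sum_star_configs:
  "(\<Sum>a\<in>Iset n (kf 0). \<Sum>bs\<in>PiE {1..m} (\<lambda>l. Nset n (kf 0) (kf l) a). g (bs(0 := a)))
    = (\<Sum>c\<in>star_configs n m kf. g c)"
proof -
  let ?S = "Sigma (Iset n (kf 0)) (\<lambda>a. PiE {1..m} (\<lambda>l. Nset n (kf 0) (kf l) a))"
  have fin: "finite (PiE {1..m} (\<lambda>l. Nset n (kf 0) (kf l) a))" for a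
    by (intro finite_PiE finite_subset[OF _ finite_Iset]) (auto simp: Nset_def)
  have "bij_betw (\<lambda>(a, bs). bs(0 := a)) ?S (star_configs n m kf)"
    by (rule bij_betw_byWitness[where f' = "\<lambda>c. (c 0, restrict c {1..m})"])
       (auto simp: star_configs_def Nset_def PiE_iff extensional_def fun_eq_iff)
  then have "(\<Sum>z\<in>?S. g ((\<lambda>(a, bs). bs(0 := a)) z)) = (\<Sum>c\<in>star_configs n m kf. g c)"
    by (rule sum.reindex_bij_betw)
  then show ?thesis
    using fin by (simp add: sum.Sigma[OF finite_Iset] split_beta)
qed

lemma sum_star_eq_sum_star_configs:
  fixes g :: "nat \<Rightarrow> (nat \<Rightarrow> nat) \<Rightarrow> 'a::comm_semiring_1" and i :: nat and ii :: "nat \<Rightarrow> nat"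
  defines "idx \<equiv> \<lambda>f. if f = 0 then i else ii f"
  shows "(\<Sum>a\<in>Iset n (k i). \<Sum>bs\<in>PiE {1..m} (\<lambda>l. Nset n (k i) (k (ii l)) a).
      g i a * (\<Prod>l\<in>{1..m}. g (ii l) (bs l)))
    = (\<Sum>c\<in>star_configs n m (\<lambda>f. k (idx f)). \<Prod>f\<in>{0..m}. g (idx f) (c f))"
proof -
  have prod: "(\<Prod>f\<in>{0..m}. g (idx f) ((bs(0 := a)) f)) = g i a * (\<Prod>l\<in>{1..m}. g (ii l) (bs l))" for a bs
  proof -
    have "{0..m} = insert 0 {1..m}" by auto
    moreover have "(\<Prod>l\<in>{1..m}. g (idx l) ((bs(0 := a)) l)) = (\<Prod>l\<in>{1..m}. g (ii l) (bs l))"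
      by (rule prod.cong) (auto simp: idx_def)
    ultimately show ?thesis by (simp add: idx_def)
  qed
  have idx0: "idx 0 = i" by (simp add: idx_def)
  have PiE_idx: "PiE {1..m} (\<lambda>l. Nset n (k i) (k (ii l)) a) = PiE {1..m} (\<lambda>l. Nset n (k i) (k (idx l)) a)" for a
    by (rule PiE_cong) (auto simp: idx_def)
  have "(\<Sum>a\<in>Iset n (k i). \<Sum>bs\<in>PiE {1..m} (\<lambda>l. Nset n (k i) (k (ii l)) a).
      g i a * (\<Prod>l\<in>{1..m}. g (ii l) (bs l)))
    = (\<Sum>a\<in>Iset n (k (idx 0)). \<Sum>bs\<in>PiE {1..m} (\<lambda>l. Nset n (k (idx 0)) (k (idx l)) a).
      \<Prod>f\<in>{0..m}. g (idx f) ((bs(0 := a)) f))"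
    by (simp only: idx0 PiE_idx prod)
  also have "\<dots> = (\<Sum>c\<in>star_configs n m (\<lambda>f. k (idx f)). \<Prod>f\<in>{0..m}. g (idx f) (c f))"
    by (rule sum_star_configs)
  finally show ?thesis .
qed

section \<open>Counting\<close>

lemma card_bounded_subsets_le:
  assumes "1 \<le> n"
  shows "card {W. W \<subseteq> {1..n::nat} \<and> card W \<le> V} \<le> (V + 1) * n ^ V"
proof -
  have "{W. W \<subseteq> {1..n} \<and> card W \<le> V} = (\<Union>v\<in>{..V}. {W. W \<subseteq> {1..n} \<and> card W = v})" by auto
  then have "card {W. W \<subseteq> {1..n} \<and> card W \<le> V} \<le> (\<Sum>v\<in>{..V}. card {W. W \<subseteq> {1..n} \<and> card W = v})"
    by (simp add: card_UN_le)
  also have "\<dots> = (\<Sum>v\<in>{..V}. n choose v)" by (simp add: n_subsets)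
  also have "\<dots> \<le> (\<Sum>v\<in>{..V}. n ^ V)"
  proof (rule sum_mono)
    fix v assume v: "v \<in> {..V}"
    have "n choose v \<le> n ^ v"
      by (cases "v \<le> n") (auto simp: binomial_le_pow binomial_eq_0)
    also have "\<dots> \<le> n ^ V" using v assms by (intro power_increasing) auto
    finally show "n choose v \<le> n ^ V" .
  qed
  finally show ?thesis by simp
qed

lemma card_configs_few_vertices_le:
  assumes FI: "finite FI" and n: "1 \<le> n"
  shows "card {c \<in> PiE FI (\<lambda>f. PiE {1..kf f} (\<lambda>_. {1..n})). card (config_vertices FI kf c) \<le> V}
    \<le> (V + 1) * n ^ V * V ^ (\<Sum>f\<in>FI. kf f)"
proof -
  let ?WW = "{W. W \<subseteq> {1..n} \<and> card W \<le> V}"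
  let ?C = "\<lambda>W. PiE FI (\<lambda>f. PiE {1..kf f} (\<lambda>_. W))"
  have finWW: "finite ?WW" by (rule finite_subset[of _ "Pow {1..n}"]) auto
  have finC: "finite (?C W)" if "W \<in> ?WW" for W
    using that FI by (intro finite_PiE) (auto intro: finite_subset)
  have "{c \<in> ?C {1..n}. card (config_vertices FI kf c) \<le> V} \<subseteq> (\<Union>W\<in>?WW. ?C W)"
  proof
    fix c assume c: "c \<in> {c \<in> ?C {1..n}. card (config_vertices FI kf c) \<le> V}"
    then have "config_vertices FI kf c \<in> ?WW" "c \<in> ?C (config_vertices FI kf c)"
      by (auto simp: config_vertices_def PiE_iff)
    then show "c \<in> (\<Union>W\<in>?WW. ?C W)" by blast
  qed
  then have "card {c \<in> ?C {1..n}. card (config_vertices FI kf c) \<le> V} \<le> card (\<Union>W\<in>?WW. ?C W)"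
    using finWW finC by (intro card_mono) auto
  also have "\<dots> \<le> (\<Sum>W\<in>?WW. card (?C W))" by (rule card_UN_le[OF finWW])
  also have "\<dots> \<le> (\<Sum>W\<in>?WW. V ^ (\<Sum>f\<in>FI. kf f))"
  proof (rule sum_mono)
    fix W assume "W \<in> ?WW"
    then have "card (?C W) = card W ^ (\<Sum>f\<in>FI. kf f)" "card W \<le> V"
      using FI by (auto simp: card_PiE power_sum)
    then show "card (?C W) \<le> V ^ (\<Sum>f\<in>FI. kf f)" by (simp add: power_mono)
  qed
  also have "\<dots> \<le> (V + 1) * n ^ V * V ^ (\<Sum>f\<in>FI. kf f)"
    using card_bounded_subsets_le[OF n, of V] by simp
  finally show ?thesis .
qed

lemma card_repeated_star_configs_le:
  assumes n: "1 \<le> n" and m: "1 \<le> m" and k0: "1 \<le> kf 0"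
    and E: "\<And>f. f \<in> {0..m} \<Longrightarrow> connected_graph_on (kf f) (E f)"
  defines "S \<equiv> \<Sum>f\<in>{0..m}. kf f"
  defines "V \<equiv> (S + 1 - m) div 2"
  shows "card {c \<in> star_configs n m kf. edges_repeated {0..m} E c} \<le> (V + 1) * n ^ V * V ^ S"
proof -
  let ?P = "PiE {0..m} (\<lambda>f. PiE {1..kf f} (\<lambda>_. {1..n}))"
  have "{c \<in> star_configs n m kf. edges_repeated {0..m} E c}
      \<subseteq> {c \<in> ?P. card (config_vertices {0..m} kf c) \<le> V}"
  proof
    fix c assume "c \<in> {c \<in> star_configs n m kf. edges_repeated {0..m} E c}"
    then have c: "c \<in> star_configs n m kf" and rep: "edges_repeated {0..m} E c" by auto
    have "c \<in> ?P" using star_configs_Iset[OF c] Iset_subset_PiE c by (force simp: star_configs_def PiE_iff)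
    moreover have "card (config_vertices {0..m} kf c) \<le> V"
      using card_config_vertices_star_le[OF c m k0 E rep] unfolding V_def S_def by linarith
    ultimately show "c \<in> {c \<in> ?P. card (config_vertices {0..m} kf c) \<le> V}" by simp
  qed
  moreover have "finite ?P" by (intro finite_PiE) auto
  ultimately have "card {c \<in> star_configs n m kf. edges_repeated {0..m} E c}
      \<le> card {c \<in> ?P. card (config_vertices {0..m} kf c) \<le> V}"
    by (intro card_mono) auto
  also have "\<dots> \<le> (V + 1) * n ^ V * V ^ S"
    unfolding S_def by (rule card_configs_few_vertices_le[OF _ n]) simp
  finally show ?thesis .
qed

lemma inverse_sqrt_binomial_le:
  assumes k: "1 \<le> k" and kn: "k \<le> n"
  shows "1 / sqrt (real (n choose k)) \<le> real k powr (real k / 2) * real n powr (- (real k / 2))"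
proof -
  define x where "x = real n / real k"
  have x0: "0 < x" unfolding x_def using k kn by auto
  have "x powr (real k / 2) = sqrt (x ^ k)"
    using x0 by (simp add: powr_half_sqrt[symmetric] powr_realpow[symmetric] powr_powr)
  also have "\<dots> \<le> sqrt (real (n choose k))"
    unfolding x_def by (intro real_sqrt_le_mono binomial_ge_n_over_k_pow_k[OF kn])
  finally have "1 / sqrt (real (n choose k)) \<le> 1 / x powr (real k / 2)"
    using x0 by (intro frac_le) auto
  also have "\<dots> = real k powr (real k / 2) * real n powr (- (real k / 2))"
    unfolding x_def using k kn by (simp add: powr_divide powr_minus divide_simps)
  finally show ?thesis .
qed

lemma powr_star_exponent_le:
  assumes n: "1 \<le> n" and "m \<le> S"
  shows "real n ^ ((S + 1 - m) div 2) * real n powr (- (real S / 2)) \<le> real n powr (- (real m - 1) / 2)"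
proof -
  have "2 * real ((S + 1 - m) div 2) \<le> real S + 1 - real m" using assms(2) by linarith
  then have "real ((S + 1 - m) div 2) - real S / 2 \<le> - (real m - 1) / 2" by simp
  then have "real n powr (real ((S + 1 - m) div 2) - real S / 2) \<le> real n powr (- (real m - 1) / 2)"
    using n by (intro powr_mono) auto
  then show ?thesis
    using n by (simp add: powr_realpow[symmetric] powr_add[symmetric])
qed

section \<open>Integrals and conditional expectations\<close>

lemma set_integral_real_indicator: "(\<integral>x\<in>A. f x \<partial>M) = (\<integral>x. indicator A x * f x \<partial>M)"
  for f :: "'a \<Rightarrow> real"
  unfolding set_lebesgue_integral_def by simp

lemma (in finite_measure) integrable_abs_bounded:
  fixes f :: "'a \<Rightarrow> real"
  shows "f \<in> borel_measurable M \<Longrightarrow> (\<And>x. x \<in> space M \<Longrightarrow> \<bar>f x\<bar> \<le> c) \<Longrightarrow> integrable M f"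
  by (rule integrable_const_bound[of _ c]) auto

lemma (in prob_space) abs_integral_le_const:
  fixes f :: "'a \<Rightarrow> real"
  assumes "integrable M f" "\<And>x. x \<in> space M \<Longrightarrow> \<bar>f x\<bar> \<le> c"
  shows "\<bar>\<integral>x. f x \<partial>M\<bar> \<le> c"
proof -
  have "\<bar>\<integral>x. f x \<partial>M\<bar> \<le> (\<integral>x. \<bar>f x\<bar> \<partial>M)" by (rule integral_abs_bound)
  also have "\<dots> \<le> c" using assms by (intro integral_le_const) auto
  finally show ?thesis .
qed

lemma (in finite_measure_subalgebra) real_cond_exp_charact_generator:
  assumes F: "sets F = sigma_sets (space M) G"
    and G: "Int_stable G" "G \<subseteq> sets M" "space M \<in> G"
    and int: "integrable M f" "integrable M g" and g: "g \<in> borel_measurable F"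
    and eq: "\<And>A. A \<in> G \<Longrightarrow> (\<integral>x\<in>A. f x \<partial>M) = (\<integral>x\<in>A. g x \<partial>M)"
  shows "AE x in M. real_cond_exp M F f x = g x"
proof (rule real_cond_exp_charact[OF _ int g])
  have set_int: "set_integrable M A h" if "A \<in> sets M" "integrable M h" for A and h :: "'a \<Rightarrow> real"
    using integrable_mult_indicator[OF that] unfolding set_integrable_def .
  have GM: "sigma_sets (space M) G \<subseteq> sets M" using sets.sigma_sets_subset[OF G(2)] .
  have GP: "G \<subseteq> Pow (space M)" using G(2) sets.sets_into_space by blast
  fix A assume "A \<in> sets F"
  then have "A \<in> sigma_sets (space M) G" using F by simp
  with G(1) GP show "(\<integral>x\<in>A. f x \<partial>M) = (\<integral>x\<in>A. g x \<partial>M)"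
  proof (induction rule: sigma_sets_induct_disjoint)
    case (compl A)
    have A: "A \<in> sets M" using compl(1) GM by blast
    have split: "(\<integral>x\<in>space M. h x \<partial>M) = (\<integral>x\<in>A. h x \<partial>M) + (\<integral>x\<in>space M - A. h x \<partial>M)"
      if "integrable M h" for h :: "'a \<Rightarrow> real"
      using set_integral_Un[of A "space M - A" M h] set_int[OF A that] set_int[OF _ that] A
        sets.sets_into_space[OF A] by (simp add: Un_absorb1)
    show ?case using split[OF int(1)] split[OF int(2)] compl(2) eq[OF G(3)] by simp
  next
    case (union A)
    have A: "\<And>i. A i \<in> sets M" "(\<Union>i. A i) \<in> sets M" using union(2) GM by blast+
    have "(\<integral>x\<in>(\<Union>i. A i). f x \<partial>M) = (\<Sum>i. (\<integral>x\<in>A i. f x \<partial>M))"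
      using union(1) A int(1) by (intro lebesgue_integral_countable_add set_int) (auto simp: disjoint_family_on_def)
    also have "\<dots> = (\<Sum>i. (\<integral>x\<in>A i. g x \<partial>M))" using union(3) by simp
    also have "\<dots> = (\<integral>x\<in>(\<Union>i. A i). g x \<partial>M)"
      using union(1) A int(2) by (intro lebesgue_integral_countable_add[symmetric] set_int)
        (auto simp: disjoint_family_on_def)
    finally show ?case .
  qed (use eq in \<open>auto simp: set_lebesgue_integral_def\<close>)
qed

lemma (in finite_measure_subalgebra) real_cond_exp_intg_AE:
  assumes ae: "AE x in M. real_cond_exp M F f x = h x" and h: "h \<in> borel_measurable M"
    and int: "integrable M (\<lambda>x. g x * f x)" and g: "g \<in> borel_measurable F" and f: "f \<in> borel_measurable M"
  shows "integrable M (\<lambda>x. g x * h x)" "(\<integral>x. g x * h x \<partial>M) = (\<integral>x. g x * f x \<partial>M)"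
proof -
  have gM: "g \<in> borel_measurable M" using measurable_from_subalg[OF subalg g] .
  have RM: "real_cond_exp M F f \<in> borel_measurable M"
    using measurable_from_subalg[OF subalg borel_measurable_cond_exp] .
  have eq: "AE x in M. g x * real_cond_exp M F f x = g x * h x" using ae by eventually_elim simp
  show "integrable M (\<lambda>x. g x * h x)"
    using real_cond_exp_intg(1)[OF int g f] integrable_cong_AE[OF _ _ eq] gM RM h by simp
  show "(\<integral>x. g x * h x \<partial>M) = (\<integral>x. g x * f x \<partial>M)"
    using real_cond_exp_intg(2)[OF int g f] integral_cong_AE[OF _ _ eq] gM RM h by simp
qed

section \<open>The sampling model\<close>

locale graphon_sample = prob_space M
  for M :: "'o measure" +
  fixes n :: nat and U :: "nat \<Rightarrow> 'o \<Rightarrow> real" and Y :: "nat \<Rightarrow> nat \<Rightarrow> 'o \<Rightarrow> real"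
    and \<kappa> :: "real \<Rightarrow> real \<Rightarrow> real" and B :: real
  assumes graphon: "graphon \<kappa>"
    and U_measurable: "\<And>v. v \<in> {1..n} \<Longrightarrow> U v \<in> borel_measurable M"
    and U_range: "\<And>v \<omega>. v \<in> {1..n} \<Longrightarrow> \<omega> \<in> space M \<Longrightarrow> U v \<omega> \<in> {0..1}"
    and Y_measurable: "\<And>v w. 1 \<le> v \<Longrightarrow> v < w \<Longrightarrow> w \<le> n \<Longrightarrow> Y v w \<in> borel_measurable M"
    and Y_bounded: "\<And>v w \<omega>. 1 \<le> v \<Longrightarrow> v < w \<Longrightarrow> w \<le> n \<Longrightarrow> \<omega> \<in> space M \<Longrightarrow> \<bar>Y v w \<omega>\<bar> \<le> B"
    and Y_cond_exp: "\<And>v w. 1 \<le> v \<Longrightarrow> v < w \<Longrightarrow> w \<le> n \<Longrightarrow>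
        AE \<omega> in M. real_cond_exp M (sigmaU M n U) (Y v w) \<omega> = \<kappa> (U v \<omega>) (U w \<omega>)"
    and Y_cond_indep: "cond_indep_vars M (sigmaU M n U) (\<lambda>(v, w). Y v w) {(v, w). 1 \<le> v \<and> v < w \<and> w \<le> n}"

begin

abbreviation FU :: "'o measure" where
  "FU \<equiv> sigmaU M n U"

definition pairs :: "(nat \<times> nat) set" where
  "pairs = {(v, w). 1 \<le> v \<and> v < w \<and> w \<le> n}"

definition Ypair :: "nat \<times> nat \<Rightarrow> 'o \<Rightarrow> real" where
  "Ypair q = Y (fst q) (snd q)"

definition kappa_pair :: "nat \<times> nat \<Rightarrow> 'o \<Rightarrow> real" where
  "kappa_pair q \<omega> = \<kappa> (U (fst q) \<omega>) (U (snd q) \<omega>)"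

definition centred :: "nat \<times> nat \<Rightarrow> 'o \<Rightarrow> real" where
  "centred q \<omega> = Ypair q \<omega> - kappa_pair q \<omega>"

definition Y_event :: "(nat \<times> nat) set \<Rightarrow> (nat \<times> nat \<Rightarrow> real set) \<Rightarrow> 'o set" where
  "Y_event Q D = {\<omega> \<in> space M. \<forall>q\<in>Q. Ypair q \<omega> \<in> D q}"

definition UY_generator :: "(nat \<times> nat) set \<Rightarrow> 'o set set" where
  "UY_generator Q = {A \<inter> Y_event Q D | A D. A \<in> sets FU \<and> (\<forall>q\<in>Q. D q \<in> sets borel)}"

definition sigma_UY :: "(nat \<times> nat) set \<Rightarrow> 'o measure" where
  "sigma_UY Q = sigma (space M) (UY_generator Q)"

lemma finite_pairs: "finite pairs"
  by (rule finite_subset[of _ "{1..n} \<times> {1..n}"]) (auto simp: pairs_def)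

lemma Ypair_measurable: "q \<in> pairs \<Longrightarrow> Ypair q \<in> borel_measurable M"
  unfolding pairs_def Ypair_def using Y_measurable by auto

lemma abs_Ypair_le: "q \<in> pairs \<Longrightarrow> \<omega> \<in> space M \<Longrightarrow> \<bar>Ypair q \<omega>\<bar> \<le> B"
  unfolding pairs_def Ypair_def using Y_bounded by auto

lemma integrable_Ypair: "q \<in> pairs \<Longrightarrow> integrable M (Ypair q)"
  by (rule integrable_const_bound[of _ B]) (auto intro: Ypair_measurable abs_Ypair_le)

lemma sets_FU: "sets FU = sigma_sets (space M) {U v -` A \<inter> space M | v A. v \<in> {1..n} \<and> A \<in> sets borel}"
  unfolding sigmaU_def by (rule sets_measure_of) auto

lemma space_FU: "space FU = space M"
  unfolding sigmaU_def by (rule space_measure_of) auto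

lemma subalgebra_FU: "subalgebra M FU"
proof -
  have "{U v -` A \<inter> space M | v A. v \<in> {1..n} \<and> A \<in> sets borel} \<subseteq> sets M"
    using U_measurable by (auto simp: measurable_sets)
  then show ?thesis
    unfolding subalgebra_def using space_FU sets_FU sets.sigma_sets_subset[of _ M] by simp
qed

sublocale FU: finite_measure_subalgebra M FU
  by unfold_locales (rule subalgebra_FU)

lemma sets_FU_subset: "A \<in> sets FU \<Longrightarrow> A \<in> sets M"
  using subalgebra_FU unfolding subalgebra_def by auto

lemma U_measurable_FU: "v \<in> {1..n} \<Longrightarrow> U v \<in> borel_measurable FU"
  by (rule measurableI) (auto simp: space_FU sets_FU)

lemma kappa_pair_measurable_FU:
  assumes "q \<in> pairs" shows "kappa_pair q \<in> borel_measurable FU"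
proof -
  have "(\<lambda>(x, y). \<kappa> x y) \<in> borel_measurable (borel \<Otimes>\<^sub>M borel)"
    using graphon unfolding graphon_def by (simp add: borel_prod)
  moreover have "(\<lambda>\<omega>. (U (fst q) \<omega>, U (snd q) \<omega>)) \<in> measurable FU (borel \<Otimes>\<^sub>M borel)"
    using assms U_measurable_FU unfolding pairs_def by (auto intro!: measurable_Pair)
  ultimately show ?thesis
    using measurable_comp unfolding kappa_pair_def comp_def by fastforce
qed

lemma kappa_pair_range: "q \<in> pairs \<Longrightarrow> \<omega> \<in> space M \<Longrightarrow> kappa_pair q \<omega> \<in> {0..1}"
  using graphon U_range unfolding graphon_def kappa_pair_def pairs_def by auto

lemma integrable_kappa_pair: "q \<in> pairs \<Longrightarrow> integrable M (kappa_pair q)"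
  using measurable_from_subalg[OF subalgebra_FU kappa_pair_measurable_FU] kappa_pair_range
  by (intro integrable_const_bound[of _ 1]) auto

lemma abs_centred_le: "q \<in> pairs \<Longrightarrow> \<omega> \<in> space M \<Longrightarrow> \<bar>centred q \<omega>\<bar> \<le> \<bar>B\<bar> + 1"
  using abs_Ypair_le[of q \<omega>] kappa_pair_range[of q \<omega>] unfolding centred_def by auto

lemma Y_event_in_sets:
  assumes "Q \<subseteq> pairs" "\<forall>q\<in>Q. D q \<in> sets borel"
  shows "Y_event Q D \<in> sets M"
proof -
  have "finite Q" using assms(1) finite_pairs finite_subset by blast
  moreover have "\<forall>q\<in>Q. {\<omega> \<in> space M. Ypair q \<omega> \<in> D q} \<in> sets M"
    using assms Ypair_measurable by (auto intro: measurable_sets_Collect)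
  ultimately show ?thesis
    unfolding Y_event_def by (intro sets.sets_Collect_finite_All) (auto simp: pred_def)
qed

lemma UY_generator_subset: "Q \<subseteq> pairs \<Longrightarrow> UY_generator Q \<subseteq> sets M"
  unfolding UY_generator_def using sets_FU_subset Y_event_in_sets by blast

lemma Int_stable_UY_generator: "Int_stable (UY_generator Q)"
proof (rule Int_stableI)
  fix a b assume "a \<in> UY_generator Q" "b \<in> UY_generator Q"
  then obtain A D A' D' where a: "a = A \<inter> Y_event Q D" "A \<in> sets FU" "\<forall>q\<in>Q. D q \<in> sets borel"
    and b: "b = A' \<inter> Y_event Q D'" "A' \<in> sets FU" "\<forall>q\<in>Q. D' q \<in> sets borel"
    unfolding UY_generator_def by blast
  have "a \<inter> b = (A \<inter> A') \<inter> Y_event Q (\<lambda>q. D q \<inter> D' q)" unfolding a b Y_event_def by auto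
  then show "a \<inter> b \<in> UY_generator Q" unfolding UY_generator_def using a b by blast
qed

lemma sets_FU_in_UY_generator: "A \<in> sets FU \<Longrightarrow> A \<in> UY_generator Q"
proof -
  assume A: "A \<in> sets FU"
  then have "A = A \<inter> Y_event Q (\<lambda>_. UNIV)"
    using sets.sets_into_space[OF sets_FU_subset[OF A]] by (auto simp: Y_event_def)
  then show ?thesis unfolding UY_generator_def using A by fastforce
qed

lemma UY_generator_Pow: "Q \<subseteq> pairs \<Longrightarrow> UY_generator Q \<subseteq> Pow (space M)"
  using UY_generator_subset sets.sets_into_space by blast

lemma space_sigma_UY: "Q \<subseteq> pairs \<Longrightarrow> space (sigma_UY Q) = space M"
  unfolding sigma_UY_def using UY_generator_Pow by (simp add: space_measure_of)

lemma sets_sigma_UY: "Q \<subseteq> pairs \<Longrightarrow> sets (sigma_UY Q) = sigma_sets (space M) (UY_generator Q)"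
  unfolding sigma_UY_def using UY_generator_Pow by (simp add: sets_measure_of)

lemma subalgebra_sigma_UY: "Q \<subseteq> pairs \<Longrightarrow> subalgebra M (sigma_UY Q)"
  unfolding subalgebra_def
  using space_sigma_UY sets_sigma_UY sets.sigma_sets_subset[OF UY_generator_subset] by simp

lemma measurable_FU_sigma_UY:
  "Q \<subseteq> pairs \<Longrightarrow> f \<in> borel_measurable FU \<Longrightarrow> f \<in> borel_measurable (sigma_UY Q)"
  by (rule measurable_from_subalg[of "sigma_UY Q" FU])
    (auto simp: subalgebra_def space_sigma_UY space_FU sets_sigma_UY intro: sets_FU_in_UY_generator)

lemma Ypair_measurable_sigma_UY:
  assumes Q: "Q \<subseteq> pairs" and q: "q \<in> Q"
  shows "Ypair q \<in> borel_measurable (sigma_UY Q)"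
proof (rule measurableI)
  fix D :: "real set" assume D: "D \<in> sets borel"
  define D' where "D' = (\<lambda>q'. if q' = q then D else UNIV)"
  have "Ypair q -` D \<inter> space (sigma_UY Q) = space M \<inter> Y_event Q D'"
    unfolding D'_def Y_event_def using q Q space_sigma_UY by auto
  moreover have "space M \<inter> Y_event Q D' \<in> UY_generator Q"
  proof -
    have "space M \<in> sets FU" using space_FU by (metis sets.top)
    moreover have "\<forall>q'\<in>Q. D' q' \<in> sets borel" using D unfolding D'_def by simp
    ultimately show ?thesis unfolding UY_generator_def by blast
  qed
  ultimately show "Ypair q -` D \<inter> space (sigma_UY Q) \<in> sets (sigma_UY Q)"
    using sets_sigma_UY[OF Q] by auto
qed auto

lemma cond_exp_Y_event_prod:
  assumes K: "K \<subseteq> pairs" and D: "\<forall>q\<in>K. D q \<in> sets borel"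
  shows "AE \<omega> in M. real_cond_exp M FU (indicator (Y_event K D)) \<omega>
     = (\<Prod>q\<in>K. real_cond_exp M FU (indicator (Y_event {q} D)) \<omega>)"
proof -
  let ?Yq = "\<lambda>q. (\<lambda>(v, w). Y v w) q -` D q \<inter> space M"
  have "finite K" using K finite_pairs finite_subset by blast
  then have ci: "AE \<omega> in M. real_cond_exp M FU (indicator (\<Inter>q\<in>K. ?Yq q)) \<omega>
      = (\<Prod>q\<in>K. real_cond_exp M FU (indicator (?Yq q)) \<omega>)"
    using Y_cond_indep K D unfolding cond_indep_vars_def pairs_def by blast
  have single: "\<And>q. ?Yq q = Y_event {q} D"
    unfolding Y_event_def Ypair_def by (auto simp: split_beta)
  have inter: "\<And>\<omega>. \<omega> \<in> space M \<Longrightarrow> indicator (\<Inter>q\<in>K. ?Yq q) \<omega> = (indicator (Y_event K D) \<omega> :: real)"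
    unfolding Y_event_def Ypair_def by (auto simp: split_beta split: split_indicator)
  have meas: "(indicator (Y_event K D) :: 'o \<Rightarrow> real) \<in> borel_measurable M"
    using Y_event_in_sets[OF K D] by simp
  then have "AE \<omega> in M. real_cond_exp M FU (indicator (\<Inter>q\<in>K. ?Yq q)) \<omega>
      = real_cond_exp M FU (indicator (Y_event K D)) \<omega>"
    using measurable_cong[of M _ "indicator (Y_event K D)", OF inter]
    by (intro FU.real_cond_exp_cong[OF AE_I2[OF inter]]) auto
  then show ?thesis using ci unfolding single by auto
qed

lemma cond_exp_Y_event_insert:
  assumes p: "p \<in> pairs" and Q: "Q \<subseteq> pairs" "p \<notin> Q" and D: "\<forall>q\<in>insert p Q. D q \<in> sets borel"
  shows "AE \<omega> in M. real_cond_exp M FU (indicator (Y_event (insert p Q) D)) \<omega>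
    = real_cond_exp M FU (indicator (Y_event {p} D)) \<omega> * real_cond_exp M FU (indicator (Y_event Q D)) \<omega>"
proof -
  have "finite Q" using Q finite_pairs finite_subset by blast
  have "AE \<omega> in M. real_cond_exp M FU (indicator (Y_event (insert p Q) D)) \<omega>
      = (\<Prod>q\<in>insert p Q. real_cond_exp M FU (indicator (Y_event {q} D)) \<omega>)"
    by (rule cond_exp_Y_event_prod) (use p Q D in auto)
  moreover have "AE \<omega> in M. real_cond_exp M FU (indicator (Y_event Q D)) \<omega>
      = (\<Prod>q\<in>Q. real_cond_exp M FU (indicator (Y_event {q} D)) \<omega>)"
    by (rule cond_exp_Y_event_prod) (use Q D in auto)
  ultimately show ?thesis by eventually_elim (use \<open>finite Q\<close> Q(2) in simp)
qed

lemma set_integral_Y_event_eq_cond_exp: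
  assumes p: "p \<in> pairs" and Q: "Q \<subseteq> pairs" "p \<notin> Q" and D: "\<forall>q\<in>Q. D q \<in> sets borel"
    and A: "A \<in> sets FU" and D': "D' p \<in> sets borel"
  shows "(\<integral>x\<in>A \<inter> Y_event {p} D'. (indicator (Y_event Q D) x :: real) \<partial>M)
    = (\<integral>x\<in>A \<inter> Y_event {p} D'. real_cond_exp M FU (indicator (Y_event Q D)) x \<partial>M)"
proof -
  let ?R = "\<lambda>S. real_cond_exp M FU (indicator S)"
  define D'' where "D'' = D(p := D' p)"
  have D'': "\<forall>q\<in>insert p Q. D'' q \<in> sets borel" using D D' unfolding D''_def by auto
  have AM: "A \<in> sets M" using sets_FU_subset[OF A] .
  have E''M: "Y_event (insert p Q) D'' \<in> sets M" by (rule Y_event_in_sets) (use p Q D'' in auto)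
  have EpM: "Y_event {p} D' \<in> sets M" by (rule Y_event_in_sets) (use p D' in auto)
  have EQM: "Y_event Q D \<in> sets M" by (rule Y_event_in_sets[OF Q(1) D])
  have E'': "Y_event Q D'' = Y_event Q D" "Y_event {p} D'' = Y_event {p} D'"
    unfolding Y_event_def D''_def using Q by auto
  have factor: "AE \<omega> in M. ?R (Y_event (insert p Q) D'') \<omega> = ?R (Y_event {p} D') \<omega> * ?R (Y_event Q D) \<omega>"
    using cond_exp_Y_event_insert[OF p Q D''] unfolding E'' .
  have "(\<integral>x\<in>A \<inter> Y_event {p} D'. (indicator (Y_event Q D) x :: real) \<partial>M)
      = (\<integral>x. indicator A x * indicator (Y_event (insert p Q) D'') x \<partial>M)"
    unfolding set_integral_real_indicator
    by (rule Bochner_Integration.integral_cong) (use Q in \<open>auto simp: Y_event_def D''_def split: split_indicator\<close>)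
  also have "\<dots> = (\<integral>x. indicator A x * ?R (Y_event (insert p Q) D'') x \<partial>M)"
    by (rule FU.real_cond_exp_intg(2)[symmetric])
      (use AM E''M A in \<open>auto intro!: integrable_abs_bounded[of _ 1] split: split_indicator\<close>)
  also have "\<dots> = (\<integral>x. (indicator A x * ?R (Y_event Q D) x) * ?R (Y_event {p} D') x \<partial>M)"
    by (rule integral_cong_AE) (use factor AM in \<open>auto elim!: eventually_mono\<close>)
  also have "\<dots> = (\<integral>x. (indicator A x * ?R (Y_event Q D) x) * indicator (Y_event {p} D') x \<partial>M)"
  proof (rule FU.real_cond_exp_intg(2))
    have "integrable M (\<lambda>x. ?R (Y_event Q D) x * indicator (A \<inter> Y_event {p} D') x)"
      using AM EpM EQM
      by (intro integrable_real_mult_indicator FU.real_cond_exp_int(1) integrable_abs_bounded[of _ 1])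
        (auto split: split_indicator)
    then show "integrable M (\<lambda>x. indicator A x * ?R (Y_event Q D) x * indicator (Y_event {p} D') x)"
      by (rule back_subst[of "integrable M"]) (auto simp: fun_eq_iff split: split_indicator)
  qed (use A EpM in auto)
  also have "\<dots> = (\<integral>x\<in>A \<inter> Y_event {p} D'. ?R (Y_event Q D) x \<partial>M)"
    unfolding set_integral_real_indicator
    by (rule Bochner_Integration.integral_cong) (auto split: split_indicator)
  finally show ?thesis .
qed

lemma cond_exp_Y_event_given_pair:
  assumes p: "p \<in> pairs" and Q: "Q \<subseteq> pairs" "p \<notin> Q" and D: "\<forall>q\<in>Q. D q \<in> sets borel"
  shows "AE \<omega> in M. real_cond_exp M (sigma_UY {p}) (indicator (Y_event Q D)) \<omega>
    = real_cond_exp M FU (indicator (Y_event Q D)) \<omega>"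
proof -
  have p': "{p} \<subseteq> pairs" using p by simp
  interpret Fp: finite_measure_subalgebra M "sigma_UY {p}"
    by unfold_locales (rule subalgebra_sigma_UY[OF p'])
  have int: "integrable M (indicator (Y_event Q D) :: 'o \<Rightarrow> real)"
    using Y_event_in_sets[OF Q(1) D] by (intro integrable_abs_bounded[of _ 1]) (auto split: split_indicator)
  show ?thesis
  proof (rule Fp.real_cond_exp_charact_generator[OF sets_sigma_UY[OF p'] Int_stable_UY_generator
        UY_generator_subset[OF p'] sets_FU_in_UY_generator[OF sets.top[of FU, unfolded space_FU]] int
        FU.real_cond_exp_int(1)[OF int] measurable_FU_sigma_UY[OF p']])
    fix C assume "C \<in> UY_generator {p}"
    then show "(\<integral>x\<in>C. indicator (Y_event Q D) x \<partial>M) = (\<integral>x\<in>C. real_cond_exp M FU (indicator (Y_event Q D)) x \<partial>M)"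
      unfolding UY_generator_def using set_integral_Y_event_eq_cond_exp[OF p Q D] by blast
  qed simp
qed

lemma set_integral_Ypair_eq_kappa_pair:
  assumes p: "p \<in> pairs" and A: "A \<in> sets FU" and D: "\<forall>q\<in>pairs - {p}. D q \<in> sets borel"
  defines "I \<equiv> Y_event (pairs - {p}) D"
  shows "(\<integral>x\<in>A \<inter> I. Ypair p x \<partial>M) = (\<integral>x\<in>A \<inter> I. kappa_pair p x \<partial>M)"
proof -
  let ?R = "real_cond_exp M FU (indicator I)"
  have p': "{p} \<subseteq> pairs" using p by simp
  interpret Fp: finite_measure_subalgebra M "sigma_UY {p}"
    by unfold_locales (rule subalgebra_sigma_UY[OF p'])
  have AM: "A \<in> sets M" using sets_FU_subset[OF A] .
  have IM: "I \<in> sets M" unfolding I_def by (rule Y_event_in_sets) (use D in auto)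
  have Ym: "Ypair p \<in> borel_measurable M" using Ypair_measurable[OF p] .
  have km: "kappa_pair p \<in> borel_measurable M"
    using measurable_from_subalg[OF subalgebra_FU kappa_pair_measurable_FU[OF p]] .
  have "AE x in M. real_cond_exp M (sigma_UY {p}) (indicator I) x = ?R x"
    unfolding I_def by (rule cond_exp_Y_event_given_pair) (use p D in auto)
  moreover have "integrable M (\<lambda>x. indicator A x * Ypair p x * indicator I x)"
  proof (rule integrable_abs_bounded)
    fix x assume "x \<in> space M"
    then show "\<bar>indicator A x * Ypair p x * indicator I x\<bar> \<le> B"
      using abs_Ypair_le[OF p] by (force split: split_indicator)
  qed (use AM IM Ym in simp)
  moreover have "(\<lambda>x. indicator A x * Ypair p x) \<in> borel_measurable (sigma_UY {p})"
    using measurable_FU_sigma_UY[OF p', of "indicator A"] A Ypair_measurable_sigma_UY[OF p']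
    by (intro borel_measurable_times) simp_all
  ultimately have step1: "integrable M (\<lambda>x. (indicator A x * Ypair p x) * ?R x)"
    "(\<integral>x. (indicator A x * Ypair p x) * ?R x \<partial>M) = (\<integral>x. (indicator A x * Ypair p x) * indicator I x \<partial>M)"
    using Fp.real_cond_exp_intg_AE[of "indicator I" ?R] IM
      measurable_from_subalg[OF subalgebra_FU borel_measurable_cond_exp] by simp_all
  have step2: "(\<integral>x. (indicator A x * ?R x) * kappa_pair p x \<partial>M) = (\<integral>x. (indicator A x * ?R x) * Ypair p x \<partial>M)"
  proof (rule FU.real_cond_exp_intg_AE(2))
    show "AE x in M. real_cond_exp M FU (Ypair p) x = kappa_pair p x"
      using Y_cond_exp p unfolding pairs_def Ypair_def kappa_pair_def by auto
    show "integrable M (\<lambda>x. indicator A x * ?R x * Ypair p x)"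
      using step1(1) by (simp add: mult_ac)
  qed (use A km Ym in simp_all)
  have step3: "(\<integral>x. (indicator A x * kappa_pair p x) * ?R x \<partial>M)
      = (\<integral>x. (indicator A x * kappa_pair p x) * indicator I x \<partial>M)"
  proof (rule FU.real_cond_exp_intg_AE(2))
    show "integrable M (\<lambda>x. indicator A x * kappa_pair p x * indicator I x)"
      using AM IM km kappa_pair_range[OF p]
      by (intro integrable_abs_bounded[of _ 1]) (auto split: split_indicator)
  qed (use A IM kappa_pair_measurable_FU[OF p] in simp_all)
  show ?thesis
    using step1(2) step2 step3
    by (simp add: set_integral_real_indicator indicator_inter_arith mult_ac)
qed

lemma cond_exp_Ypair_given_others:
  assumes p: "p \<in> pairs"
  shows "AE \<omega> in M. real_cond_exp M (sigma_UY (pairs - {p})) (Ypair p) \<omega> = kappa_pair p \<omega>"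
proof -
  have Q: "pairs - {p} \<subseteq> pairs" by auto
  interpret FQ: finite_measure_subalgebra M "sigma_UY (pairs - {p})"
    by unfold_locales (rule subalgebra_sigma_UY[OF Q])
  show ?thesis
  proof (rule FQ.real_cond_exp_charact_generator[OF sets_sigma_UY[OF Q] Int_stable_UY_generator
        UY_generator_subset[OF Q] sets_FU_in_UY_generator[OF sets.top[of FU, unfolded space_FU]]
        integrable_Ypair[OF p] integrable_kappa_pair[OF p]
        measurable_FU_sigma_UY[OF Q kappa_pair_measurable_FU[OF p]]])
    fix C assume "C \<in> UY_generator (pairs - {p})"
    then show "(\<integral>x\<in>C. Ypair p x \<partial>M) = (\<integral>x\<in>C. kappa_pair p x \<partial>M)"
      unfolding UY_generator_def using set_integral_Ypair_eq_kappa_pair[OF p] by blast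
  qed
qed

lemma integral_mult_centred_eq_0:
  assumes p: "p \<in> pairs" and G: "G \<in> borel_measurable (sigma_UY (pairs - {p}))"
    and G_bounded: "\<And>x. x \<in> space M \<Longrightarrow> \<bar>G x\<bar> \<le> c"
  shows "(\<integral>x. G x * centred p x \<partial>M) = 0"
proof -
  have Q: "pairs - {p} \<subseteq> pairs" by auto
  interpret FQ: finite_measure_subalgebra M "sigma_UY (pairs - {p})"
    by unfold_locales (rule subalgebra_sigma_UY[OF Q])
  have GM: "G \<in> borel_measurable M" by (rule measurable_from_subalg[OF subalgebra_sigma_UY[OF Q] G])
  have Ym: "Ypair p \<in> borel_measurable M" using Ypair_measurable[OF p] .
  have km: "kappa_pair p \<in> borel_measurable M"
    using measurable_from_subalg[OF subalgebra_FU kappa_pair_measurable_FU[OF p]] .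
  have iY: "integrable M (\<lambda>x. G x * Ypair p x)"
    using GM Ym G_bounded abs_Ypair_le[OF p]
    by (intro integrable_abs_bounded[of _ "c * B"]) (auto simp: abs_mult intro: mult_mono')
  note k = FQ.real_cond_exp_intg_AE[OF cond_exp_Ypair_given_others[OF p] km iY G Ym]
  show ?thesis
    using Bochner_Integration.integral_diff[OF iY k(1)] k(2) by (simp add: centred_def right_diff_distrib)
qed

end

section \<open>The \<open>X\<close>-terms\<close>

text \<open>\<open>|X| \<le> factor_bound * n\<^bsup>-k/2\<^esup>\<close>: the power of \<open>k\<close> comes from \<open>(n choose k) \<ge> (n / k)\<^sup>k\<close>.\<close>
definition factor_bound :: "real \<Rightarrow> nat \<Rightarrow> real \<Rightarrow> real \<Rightarrow> real" where
  "factor_bound B k c\<phi> c\<psi> = real k powr (real k / 2) * c\<phi> * (2 * c\<psi>) * (\<bar>B\<bar> + 1) ^ (k * k)"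

lemma factor_bound_nonneg: "0 \<le> c\<phi> \<Longrightarrow> 0 \<le> c\<psi> \<Longrightarrow> 0 \<le> factor_bound B k c\<phi> c\<psi>"
  unfolding factor_bound_def by simp

context graphon_sample
begin

lemma Iset_edge_in_pairs: "a \<in> Iset n k \<Longrightarrow> graph_on k E \<Longrightarrow> e \<in> E \<Longrightarrow> (a (fst e), a (snd e)) \<in> pairs"
  unfolding Iset_def graph_on_def pairs_def by (auto simp: PiE_iff)

lemma Tterm_eq_prod_centred:
  assumes "graph_on k E"
  shows "Tterm k E \<kappa> U Y a \<omega> = (\<Prod>e\<in>E. centred (a (fst e), a (snd e)) \<omega>)"
proof (cases "2 \<le> k")
  case False
  then have "E = {}" using assms unfolding graph_on_def by auto
  then show ?thesis using False unfolding Tterm_def by simp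
qed (simp add: Tterm_def centred_def Ypair_def kappa_pair_def split_beta)

lemma Uvec_measurable_sigma_UY:
  assumes Q: "Q \<subseteq> pairs" and a: "a \<in> Iset n k"
  shows "Uvec k U a \<in> measurable (sigma_UY Q) (restrict_space (PiM {1..k} (\<lambda>_. borel)) (cube k))"
proof (rule measurable_restrict_space2)
  show "Uvec k U a \<in> space (sigma_UY Q) \<rightarrow> cube k"
    using U_range Iset_range[OF a] space_sigma_UY[OF Q] unfolding Uvec_def cube_def by auto
  have "(\<lambda>\<omega>. \<lambda>j\<in>{1..k}. U (a j) \<omega>) \<in> measurable (sigma_UY Q) (PiM {1..k} (\<lambda>_. borel))"
    using measurable_FU_sigma_UY[OF Q U_measurable_FU] Iset_range[OF a] by (intro measurable_restrict) auto
  then show "Uvec k U a \<in> measurable (sigma_UY Q) (PiM {1..k} (\<lambda>_. borel))"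
    unfolding Uvec_def by simp
qed

lemma Phiterm_measurable_sigma_UY:
  assumes Q: "Q \<subseteq> pairs" and a: "a \<in> Iset n k"
    and \<psi>: "\<psi> \<in> borel_measurable (restrict_space (PiM {1..k} (\<lambda>_. borel)) (cube k))"
  shows "Phiterm M k \<psi> U a \<in> borel_measurable (sigma_UY Q)"
proof -
  have "(\<lambda>\<omega>. \<psi> (Uvec k U a \<omega>)) \<in> borel_measurable (sigma_UY Q)"
    using measurable_comp[OF Uvec_measurable_sigma_UY[OF Q a] \<psi>] by (simp add: comp_def)
  then show ?thesis unfolding Phiterm_def by (cases "k = 1") auto
qed

lemma abs_Phiterm_le:
  assumes a: "a \<in> Iset n k"
    and \<psi>: "\<psi> \<in> borel_measurable (restrict_space (PiM {1..k} (\<lambda>_. borel)) (cube k))"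
    and \<psi>_bounded: "\<And>x. x \<in> cube k \<Longrightarrow> \<bar>\<psi> x\<bar> \<le> c" and \<omega>: "\<omega> \<in> space M"
  shows "\<bar>Phiterm M k \<psi> U a \<omega>\<bar> \<le> 2 * c"
proof -
  have bounded: "\<bar>\<psi> (Uvec k U a \<omega>')\<bar> \<le> c" if "\<omega>' \<in> space M" for \<omega>'
    using \<psi>_bounded U_range Iset_range[OF a] that unfolding Uvec_def cube_def by auto
  have "(\<lambda>\<omega>. \<psi> (Uvec k U a \<omega>)) \<in> borel_measurable (sigma_UY pairs)"
    using measurable_comp[OF Uvec_measurable_sigma_UY[OF _ a] \<psi>] by (simp add: comp_def)
  then have "(\<lambda>\<omega>. \<psi> (Uvec k U a \<omega>)) \<in> borel_measurable M"
    by (rule measurable_from_subalg[OF subalgebra_sigma_UY[OF order_refl]])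
  then have "\<bar>\<integral>\<omega>'. \<psi> (Uvec k U a \<omega>') \<partial>M\<bar> \<le> c"
    using bounded by (intro abs_integral_le_const integrable_abs_bounded) auto
  then show ?thesis using bounded[OF \<omega>] unfolding Phiterm_def by auto
qed

lemma Xterm_measurable_sigma_UY:
  assumes Q: "Q \<subseteq> pairs" and a: "a \<in> Iset n k" and E: "graph_on k E"
    and \<psi>: "\<psi> \<in> borel_measurable (restrict_space (PiM {1..k} (\<lambda>_. borel)) (cube k))"
    and edges: "\<And>e. e \<in> E \<Longrightarrow> (a (fst e), a (snd e)) \<in> Q"
  shows "Xterm M n k E \<phi> \<psi> \<kappa> U Y a \<in> borel_measurable (sigma_UY Q)"
proof -
  have "centred q \<in> borel_measurable (sigma_UY Q)" if "q \<in> Q" for q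
    unfolding centred_def[abs_def]
    using Ypair_measurable_sigma_UY[OF Q that]
      measurable_FU_sigma_UY[OF Q kappa_pair_measurable_FU[OF subsetD[OF Q that]]]
    by (intro borel_measurable_diff)
  then have "(\<lambda>\<omega>. Tterm k E \<kappa> U Y a \<omega>) \<in> borel_measurable (sigma_UY Q)"
    unfolding Tterm_eq_prod_centred[OF E] using edges by (intro borel_measurable_prod) auto
  then show ?thesis
    unfolding Xterm_def using Phiterm_measurable_sigma_UY[OF Q a \<psi>] by measurable
qed

lemma abs_Xterm_le:
  assumes k: "1 \<le> k" and a: "a \<in> Iset n k" and E: "graph_on k E"
    and \<psi>: "\<psi> \<in> borel_measurable (restrict_space (PiM {1..k} (\<lambda>_. borel)) (cube k))"
    and \<phi>_bounded: "\<And>x. x \<in> Dsimplex k \<Longrightarrow> \<bar>\<phi> x\<bar> \<le> c\<phi>"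
    and \<psi>_bounded: "\<And>x. x \<in> cube k \<Longrightarrow> \<bar>\<psi> x\<bar> \<le> c\<psi>" and \<omega>: "\<omega> \<in> space M"
  shows "\<bar>Xterm M n k E \<phi> \<psi> \<kappa> U Y a \<omega>\<bar> \<le> factor_bound B k c\<phi> c\<psi> * real n powr (- (real k / 2))"
proof -
  have coef: "\<bar>1 / sqrt (real (n choose k))\<bar> \<le> real k powr (real k / 2) * real n powr (- (real k / 2))"
    using inverse_sqrt_binomial_le[OF k Iset_le[OF a]] by simp
  have \<phi>: "\<bar>\<phi> (scaled n k a)\<bar> \<le> c\<phi>" using \<phi>_bounded[OF scaled_in_Dsimplex[OF a]] .
  have \<Phi>: "\<bar>Phiterm M k \<psi> U a \<omega>\<bar> \<le> 2 * c\<psi>" by (rule abs_Phiterm_le[OF a \<psi> \<psi>_bounded \<omega>])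
  have "E \<subseteq> {1..k} \<times> {1..k}" using E unfolding graph_on_def by auto
  then have card: "card E \<le> k * k" using card_mono[of "{1..k} \<times> {1..k}" E] by (simp add: card_cartesian_product)
  have "\<bar>Tterm k E \<kappa> U Y a \<omega>\<bar> \<le> (\<Prod>e\<in>E. \<bar>B\<bar> + 1)"
    unfolding Tterm_eq_prod_centred[OF E] abs_prod
    by (intro prod_mono) (use abs_centred_le Iset_edge_in_pairs[OF a E] \<omega> in auto)
  also have "\<dots> \<le> (\<bar>B\<bar> + 1) ^ (k * k)" using card by (simp add: power_increasing)
  finally have T: "\<bar>Tterm k E \<kappa> U Y a \<omega>\<bar> \<le> (\<bar>B\<bar> + 1) ^ (k * k)" .
  have "\<bar>Xterm M n k E \<phi> \<psi> \<kappa> U Y a \<omega>\<bar> = \<bar>1 / sqrt (real (n choose k))\<bar> * \<bar>\<phi> (scaled n k a)\<bar> *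
      \<bar>Phiterm M k \<psi> U a \<omega>\<bar> * \<bar>Tterm k E \<kappa> U Y a \<omega>\<bar>"
    by (simp add: Xterm_def abs_mult)
  also have "\<dots> \<le> (real k powr (real k / 2) * real n powr (- (real k / 2))) * c\<phi> * (2 * c\<psi>) * (\<bar>B\<bar> + 1) ^ (k * k)"
    using order_trans[OF abs_ge_zero \<phi>] order_trans[OF abs_ge_zero \<Phi>]
    by (intro mult_mono coef \<phi> \<Phi> T) auto
  also have "\<dots> = factor_bound B k c\<phi> c\<psi> * real n powr (- (real k / 2))"
    by (simp add: factor_bound_def)
  finally show ?thesis .
qed

lemma Xterm_remove_edge:
  assumes E: "graph_on k E" and e: "e \<in> E"
  shows "Xterm M n k E \<phi> \<psi> \<kappa> U Y a \<omega>
    = Xterm M n k (E - {e}) \<phi> \<psi> \<kappa> U Y a \<omega> * centred (a (fst e), a (snd e)) \<omega>"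
proof -
  have "finite E" using E unfolding graph_on_def by (rule finite_subset) (auto intro: finite_subset[of _ "{1..k} \<times> {1..k}"])
  moreover have E': "graph_on k (E - {e})" using E unfolding graph_on_def by auto
  ultimately have "Tterm k E \<kappa> U Y a \<omega> = Tterm k (E - {e}) \<kappa> U Y a \<omega> * centred (a (fst e), a (snd e)) \<omega>"
    unfolding Tterm_eq_prod_centred[OF E] Tterm_eq_prod_centred[OF E'] using prod.remove[of E e] e
    by (simp add: mult.commute)
  then show ?thesis unfolding Xterm_def by (simp add: mult_ac)
qed

end

locale Xterm_family = graphon_sample +
  fixes FI :: "'f set" and kf :: "'f \<Rightarrow> nat" and E :: "'f \<Rightarrow> (nat \<times> nat) set"
    and \<phi> \<psi> :: "'f \<Rightarrow> (nat \<Rightarrow> real) \<Rightarrow> real" and c :: "'f \<Rightarrow> nat \<Rightarrow> nat"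
    and c\<phi> c\<psi> :: "'f \<Rightarrow> real"
  assumes finite_factors: "finite FI"
    and kf_pos: "\<And>f. f \<in> FI \<Longrightarrow> 1 \<le> kf f"
    and E_graph: "\<And>f. f \<in> FI \<Longrightarrow> graph_on (kf f) (E f)"
    and c_Iset: "\<And>f. f \<in> FI \<Longrightarrow> c f \<in> Iset n (kf f)"
    and \<psi>_measurable: "\<And>f. f \<in> FI \<Longrightarrow>
      \<psi> f \<in> borel_measurable (restrict_space (PiM {1..kf f} (\<lambda>_. borel)) (cube (kf f)))"
    and \<phi>_bounded: "\<And>f x. f \<in> FI \<Longrightarrow> x \<in> Dsimplex (kf f) \<Longrightarrow> \<bar>\<phi> f x\<bar> \<le> c\<phi> f"
    and \<psi>_bounded: "\<And>f x. f \<in> FI \<Longrightarrow> x \<in> cube (kf f) \<Longrightarrow> \<bar>\<psi> f x\<bar> \<le> c\<psi> f"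
begin

lemma prod_Xterm_measurable_sigma_UY:
  assumes "Q \<subseteq> pairs" "\<And>f e. f \<in> FI \<Longrightarrow> e \<in> E f \<Longrightarrow> (c f (fst e), c f (snd e)) \<in> Q"
  shows "(\<lambda>\<omega>. \<Prod>f\<in>FI. Xterm M n (kf f) (E f) (\<phi> f) (\<psi> f) \<kappa> U Y (c f) \<omega>) \<in> borel_measurable (sigma_UY Q)"
  using assms by (intro borel_measurable_prod Xterm_measurable_sigma_UY c_Iset E_graph \<psi>_measurable) auto

lemma prod_Xterm_measurable:
  "(\<lambda>\<omega>. \<Prod>f\<in>FI. Xterm M n (kf f) (E f) (\<phi> f) (\<psi> f) \<kappa> U Y (c f) \<omega>) \<in> borel_measurable M"
  using Iset_edge_in_pairs[OF c_Iset E_graph]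
  by (intro measurable_from_subalg[OF subalgebra_sigma_UY prod_Xterm_measurable_sigma_UY]) auto

lemma abs_prod_Xterm_le:
  "\<omega> \<in> space M \<Longrightarrow> \<bar>\<Prod>f\<in>FI. Xterm M n (kf f) (E f) (\<phi> f) (\<psi> f) \<kappa> U Y (c f) \<omega>\<bar>
    \<le> (\<Prod>f\<in>FI. factor_bound B (kf f) (c\<phi> f) (c\<psi> f) * real n powr (- (real (kf f) / 2)))"
  unfolding abs_prod
  by (intro prod_mono conjI abs_ge_zero abs_Xterm_le kf_pos c_Iset E_graph \<psi>_measurable \<phi>_bounded \<psi>_bounded)

lemma integrable_prod_Xterm:
  "integrable M (\<lambda>\<omega>. \<Prod>f\<in>FI. Xterm M n (kf f) (E f) (\<phi> f) (\<psi> f) \<kappa> U Y (c f) \<omega>)"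
  by (rule integrable_abs_bounded[OF prod_Xterm_measurable abs_prod_Xterm_le])

lemma abs_integral_prod_Xterm_le:
  "\<bar>\<integral>\<omega>. (\<Prod>f\<in>FI. Xterm M n (kf f) (E f) (\<phi> f) (\<psi> f) \<kappa> U Y (c f) \<omega>) \<partial>M\<bar>
    \<le> (\<Prod>f\<in>FI. factor_bound B (kf f) (c\<phi> f) (c\<psi> f) * real n powr (- (real (kf f) / 2)))"
  by (intro abs_integral_le_const integrable_prod_Xterm abs_prod_Xterm_le)

lemma prod_Xterm_remove_edge:
  assumes f0: "f0 \<in> FI" "e0 \<in> E f0"
  shows "(\<Prod>f\<in>FI. Xterm M n (kf f) (E f) (\<phi> f) (\<psi> f) \<kappa> U Y (c f) \<omega>)
    = (\<Prod>f\<in>FI. Xterm M n (kf f) ((E(f0 := E f0 - {e0})) f) (\<phi> f) (\<psi> f) \<kappa> U Y (c f) \<omega>)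
      * centred (c f0 (fst e0), c f0 (snd e0)) \<omega>"
proof -
  let ?X = "\<lambda>E f. Xterm M n (kf f) (E f) (\<phi> f) (\<psi> f) \<kappa> U Y (c f) \<omega>"
  have "(\<Prod>f\<in>FI - {f0}. ?X (E(f0 := E f0 - {e0})) f) = (\<Prod>f\<in>FI - {f0}. ?X E f)"
    by (rule prod.cong) auto
  then show ?thesis
    using prod.remove[OF finite_factors f0(1), of "?X E"]
      prod.remove[OF finite_factors f0(1), of "?X (E(f0 := E f0 - {e0}))"]
      Xterm_remove_edge[OF E_graph[OF f0(1)] f0(2)] by (simp add: mult_ac)
qed

text \<open>An edge used by exactly one factor contributes a centred variable \<open>Y - \<kappa>\<close> that is
  orthogonal to everything generated by \<open>U\<close> and the other edges.\<close>
lemma integral_prod_Xterm_eq_0: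
  assumes "\<not> edges_repeated FI E c"
  shows "(\<integral>\<omega>. (\<Prod>f\<in>FI. Xterm M n (kf f) (E f) (\<phi> f) (\<psi> f) \<kappa> U Y (c f) \<omega>) \<partial>M) = 0"
proof -
  from not_edges_repeated_single_edge[OF assms] obtain f0 e0 where f0: "f0 \<in> FI" "e0 \<in> E f0"
    and single: "\<forall>f\<in>FI. \<forall>e\<in>E f.
      (f, e) \<noteq> (f0, e0) \<longrightarrow> (c f (fst e), c f (snd e)) \<noteq> (c f0 (fst e0), c f0 (snd e0))"
    by (elim bexE)
  define p where "p = (c f0 (fst e0), c f0 (snd e0))"
  define E' where "E' = E(f0 := E f0 - {e0})"
  have E': "graph_on (kf f) (E' f)" if "f \<in> FI" for f
    using E_graph[OF that] unfolding E'_def graph_on_def by auto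
  interpret F': Xterm_family M n U Y \<kappa> B FI kf E' \<phi> \<psi> c c\<phi> c\<psi>
    by unfold_locales (fact finite_factors kf_pos E' c_Iset \<psi>_measurable \<phi>_bounded \<psi>_bounded)+
  have split: "(\<Prod>f\<in>FI. Xterm M n (kf f) (E f) (\<phi> f) (\<psi> f) \<kappa> U Y (c f) \<omega>)
      = (\<Prod>f\<in>FI. Xterm M n (kf f) (E' f) (\<phi> f) (\<psi> f) \<kappa> U Y (c f) \<omega>) * centred p \<omega>" for \<omega>
    unfolding E'_def p_def by (rule prod_Xterm_remove_edge[OF f0])
  have p: "p \<in> pairs" unfolding p_def using Iset_edge_in_pairs[OF c_Iset E_graph] f0 by blast
  have "(\<lambda>\<omega>. \<Prod>f\<in>FI. Xterm M n (kf f) (E' f) (\<phi> f) (\<psi> f) \<kappa> U Y (c f) \<omega>) \<in> borel_measurable (sigma_UY (pairs - {p}))"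
    using single Iset_edge_in_pairs[OF c_Iset E_graph]
    by (intro F'.prod_Xterm_measurable_sigma_UY) (auto simp: E'_def p_def split: if_splits)
  then have "(\<integral>\<omega>. (\<Prod>f\<in>FI. Xterm M n (kf f) (E' f) (\<phi> f) (\<psi> f) \<kappa> U Y (c f) \<omega>) * centred p \<omega> \<partial>M) = 0"
    using F'.abs_prod_Xterm_le by (rule integral_mult_centred_eq_0[OF p])
  then show ?thesis unfolding split .
qed

end

context graphon_sample
begin

context
  fixes m :: nat and kf :: "nat \<Rightarrow> nat" and E :: "nat \<Rightarrow> (nat \<times> nat) set"
    and \<phi> \<psi> :: "nat \<Rightarrow> (nat \<Rightarrow> real) \<Rightarrow> real" and c\<phi> c\<psi> :: "nat \<Rightarrow> real"
  assumes kf: "\<And>f. f \<in> {0..m} \<Longrightarrow> 1 \<le> kf f"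
    and E: "\<And>f. f \<in> {0..m} \<Longrightarrow> connected_graph_on (kf f) (E f)"
    and \<psi>_measurable: "\<And>f. f \<in> {0..m} \<Longrightarrow>
      \<psi> f \<in> borel_measurable (restrict_space (PiM {1..kf f} (\<lambda>_. borel)) (cube (kf f)))"
    and \<phi>_bounded: "\<And>f x. f \<in> {0..m} \<Longrightarrow> x \<in> Dsimplex (kf f) \<Longrightarrow> \<bar>\<phi> f x\<bar> \<le> c\<phi> f"
    and \<psi>_bounded: "\<And>f x. f \<in> {0..m} \<Longrightarrow> x \<in> cube (kf f) \<Longrightarrow> \<bar>\<psi> f x\<bar> \<le> c\<psi> f"
begin

lemma star_config_Xterm_family:
  assumes c: "c \<in> star_configs n m kf"
  shows "Xterm_family M n U Y \<kappa> B {0..m} kf E \<phi> \<psi> c c\<phi> c\<psi>"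
proof -
  have graph: "graph_on (kf f) (E f)" if "f \<in> {0..m}" for f
    using E[OF that] by (simp add: connected_graph_on_def)
  show ?thesis
    by unfold_locales
      (fact finite_atLeastAtMost kf graph star_configs_Iset[OF c] \<psi>_measurable \<phi>_bounded \<psi>_bounded)+
qed

lemma abs_integral_star_config_le:
  assumes n: "1 \<le> n" and c: "c \<in> star_configs n m kf"
  shows "\<bar>\<integral>\<omega>. (\<Prod>f\<in>{0..m}. Xterm M n (kf f) (E f) (\<phi> f) (\<psi> f) \<kappa> U Y (c f) \<omega>) \<partial>M\<bar>
    \<le> (if edges_repeated {0..m} E c
        then (\<Prod>f\<in>{0..m}. factor_bound B (kf f) (c\<phi> f) (c\<psi> f)) * real n powr (- (real (\<Sum>f\<in>{0..m}. kf f) / 2))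
        else 0)"
proof -
  interpret Xterm_family M n U Y \<kappa> B "{0..m}" kf E \<phi> \<psi> c c\<phi> c\<psi>
    by (rule star_config_Xterm_family[OF c])
  have "(\<Sum>f\<in>{0..m}. - (real (kf f) / 2)) = - (real (\<Sum>f\<in>{0..m}. kf f) / 2)"
    by (simp add: sum_negf sum_divide_distrib)
  then have "(\<Prod>f\<in>{0..m}. real n powr (- (real (kf f) / 2))) = real n powr (- (real (\<Sum>f\<in>{0..m}. kf f) / 2))"
    using powr_sum[of "real n" "\<lambda>f. - (real (kf f) / 2)" "{0..m}"] n by simp
  then show ?thesis
    using abs_integral_prod_Xterm_le integral_prod_Xterm_eq_0 by (simp add: prod.distrib)
qed

lemma abs_integral_sum_star_configs_le:
  assumes n: "1 \<le> n" and m: "1 \<le> m"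
  defines "S \<equiv> \<Sum>f\<in>{0..m}. kf f"
  defines "V \<equiv> (S + 1 - m) div 2"
  shows "\<bar>\<integral>\<omega>. (\<Sum>c\<in>star_configs n m kf. \<Prod>f\<in>{0..m}. Xterm M n (kf f) (E f) (\<phi> f) (\<psi> f) \<kappa> U Y (c f) \<omega>) \<partial>M\<bar>
    \<le> real ((V + 1) * V ^ S) * (\<Prod>f\<in>{0..m}. factor_bound B (kf f) (c\<phi> f) (c\<psi> f))
      * real n powr (- (real m - 1) / 2)"
proof -
  let ?X = "\<lambda>c \<omega>. \<Prod>f\<in>{0..m}. Xterm M n (kf f) (E f) (\<phi> f) (\<psi> f) \<kappa> U Y (c f) \<omega>"
  let ?C = "(\<Prod>f\<in>{0..m}. factor_bound B (kf f) (c\<phi> f) (c\<psi> f)) * real n powr (- (real S / 2))"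
  let ?SC = "star_configs n m kf"
  have C: "0 \<le> ?C"
    using \<phi>_bounded[OF _ restrict_zero_in_Dsimplex] \<psi>_bounded[OF _ restrict_zero_in_cube]
    by (intro mult_nonneg_nonneg prod_nonneg factor_bound_nonneg) (auto intro: order_trans[OF abs_ge_zero])
  have fin: "finite ?SC"
    by (rule finite_subset[of _ "PiE {0..m} (\<lambda>f. Iset n (kf f))"])
      (auto simp: star_configs_def intro: finite_PiE finite_Iset)
  have "(\<integral>\<omega>. (\<Sum>c\<in>?SC. ?X c \<omega>) \<partial>M) = (\<Sum>c\<in>?SC. \<integral>\<omega>. ?X c \<omega> \<partial>M)"
    using Xterm_family.integrable_prod_Xterm[OF star_config_Xterm_family]
    by (rule Bochner_Integration.integral_sum)
  then have "\<bar>\<integral>\<omega>. (\<Sum>c\<in>?SC. ?X c \<omega>) \<partial>M\<bar> \<le> (\<Sum>c\<in>?SC. \<bar>\<integral>\<omega>. ?X c \<omega> \<partial>M\<bar>)"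
    by (simp add: sum_abs)
  also have "\<dots> \<le> (\<Sum>c\<in>?SC. if edges_repeated {0..m} E c then ?C else 0)"
    using abs_integral_star_config_le[OF n] unfolding S_def by (intro sum_mono) auto
  also have "\<dots> = real (card {c \<in> ?SC. edges_repeated {0..m} E c}) * ?C"
    using fin by (simp add: sum.If_cases Int_def)
  also have "\<dots> \<le> real ((V + 1) * n ^ V * V ^ S) * ?C"
    using card_repeated_star_configs_le[OF n m kf E] C unfolding S_def V_def
    by (intro mult_right_mono) (auto simp del: of_nat_mult)
  also have "\<dots> = real ((V + 1) * V ^ S) * (\<Prod>f\<in>{0..m}. factor_bound B (kf f) (c\<phi> f) (c\<psi> f))
      * (real n ^ V * real n powr (- (real S / 2)))"
    by (simp add: algebra_simps)
  also have "\<dots> \<le> real ((V + 1) * V ^ S) * (\<Prod>f\<in>{0..m}. factor_bound B (kf f) (c\<phi> f) (c\<psi> f))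
      * real n powr (- (real m - 1) / 2)"
  proof -
    have "(\<Sum>f\<in>{0..m}. 1) \<le> S" unfolding S_def using kf by (intro sum_mono) auto
    moreover have "0 \<le> (\<Prod>f\<in>{0..m}. factor_bound B (kf f) (c\<phi> f) (c\<psi> f))"
      using C n by (simp add: zero_le_mult_iff)
    ultimately show ?thesis
      unfolding V_def by (intro mult_left_mono powr_star_exponent_le[OF n]) auto
  qed
  finally show ?thesis .
qed

end

lemma abs_integral_star_sum_le:
  fixes k :: "nat \<Rightarrow> nat" and F :: "nat \<Rightarrow> (nat \<times> nat) set"
    and \<phi> \<psi> :: "nat \<Rightarrow> (nat \<Rightarrow> real) \<Rightarrow> real" and c\<phi> c\<psi> :: "nat \<Rightarrow> real"
  assumes n: "1 \<le> n" and m: "1 \<le> m" and i: "i \<in> J" and ii: "\<And>l. l \<in> {1..m} \<Longrightarrow> ii l \<in> J"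
    and k: "\<And>j. j \<in> J \<Longrightarrow> 1 \<le> k j"
    and F: "\<And>j. j \<in> J \<Longrightarrow> connected_graph_on (k j) (F j)"
    and \<psi>_measurable: "\<And>j. j \<in> J \<Longrightarrow>
      \<psi> j \<in> borel_measurable (restrict_space (PiM {1..k j} (\<lambda>_. borel)) (cube (k j)))"
    and \<phi>_bounded: "\<And>j x. j \<in> J \<Longrightarrow> x \<in> Dsimplex (k j) \<Longrightarrow> \<bar>\<phi> j x\<bar> \<le> c\<phi> j"
    and \<psi>_bounded: "\<And>j x. j \<in> J \<Longrightarrow> x \<in> cube (k j) \<Longrightarrow> \<bar>\<psi> j x\<bar> \<le> c\<psi> j"
  defines "idx \<equiv> \<lambda>f. if f = 0 then i else ii f"
  defines "S \<equiv> \<Sum>f\<in>{0..m}. k (idx f)"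
  shows "\<bar>\<integral>\<omega>. (\<Sum>a\<in>Iset n (k i). \<Sum>bs\<in>PiE {1..m} (\<lambda>l. Nset n (k i) (k (ii l)) a).
        Xterm M n (k i) (F i) (\<phi> i) (\<psi> i) \<kappa> U Y a \<omega> *
        (\<Prod>l\<in>{1..m}. Xterm M n (k (ii l)) (F (ii l)) (\<phi> (ii l)) (\<psi> (ii l)) \<kappa> U Y (bs l) \<omega>)) \<partial>M\<bar>
    \<le> real (((S + 1 - m) div 2 + 1) * ((S + 1 - m) div 2) ^ S)
      * (\<Prod>f\<in>{0..m}. factor_bound B (k (idx f)) (c\<phi> (idx f)) (c\<psi> (idx f)))
      * real n powr (- (real m - 1) / 2)"
proof -
  have idx: "idx f \<in> J" if "f \<in> {0..m}" for f using that i ii by (auto simp: idx_def)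
  have "(\<Sum>a\<in>Iset n (k i). \<Sum>bs\<in>PiE {1..m} (\<lambda>l. Nset n (k i) (k (ii l)) a).
        Xterm M n (k i) (F i) (\<phi> i) (\<psi> i) \<kappa> U Y a \<omega> *
        (\<Prod>l\<in>{1..m}. Xterm M n (k (ii l)) (F (ii l)) (\<phi> (ii l)) (\<psi> (ii l)) \<kappa> U Y (bs l) \<omega>))
      = (\<Sum>c\<in>star_configs n m (\<lambda>f. k (idx f)).
        \<Prod>f\<in>{0..m}. Xterm M n (k (idx f)) (F (idx f)) (\<phi> (idx f)) (\<psi> (idx f)) \<kappa> U Y (c f) \<omega>)" for \<omega>
    unfolding idx_def
    by (rule sum_star_eq_sum_star_configs[where g = "\<lambda>j a. Xterm M n (k j) (F j) (\<phi> j) (\<psi> j) \<kappa> U Y a \<omega>"])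
  then show ?thesis
    unfolding S_def
    by (simp only:) (rule abs_integral_sum_star_configs_le; use n m k F \<psi>_measurable \<phi>_bounded \<psi>_bounded idx in auto)
qed

end

theorem lemma5:
  fixes d m i :: nat and ii :: "nat \<Rightarrow> nat"
    and k :: "nat \<Rightarrow> nat" and F :: "nat \<Rightarrow> (nat \<times> nat) set"
    and \<phi> \<psi> :: "nat \<Rightarrow> (nat \<Rightarrow> real) \<Rightarrow> real"
    and \<kappa> :: "real \<Rightarrow> real \<Rightarrow> real" and B :: real
    and M :: "nat \<Rightarrow> 'o measure"
    and U :: "nat \<Rightarrow> nat \<Rightarrow> 'o \<Rightarrow> real"
    and Y :: "nat \<Rightarrow> nat \<Rightarrow> nat \<Rightarrow> 'o \<Rightarrow> real"
  assumes d: "d \<ge> 1"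
    and k: "\<And>j. j \<in> {1..d} \<Longrightarrow> k j \<ge> 1"
    and F: "\<And>j. j \<in> {1..d} \<Longrightarrow> connected_graph_on (k j) (F j)"
    and \<phi>_meas: "\<And>j. j \<in> {1..d} \<Longrightarrow>
        \<phi> j \<in> borel_measurable (restrict_space (PiM {1..k j} (\<lambda>_. borel)) (Dsimplex (k j)))"
    and \<phi>_bdd: "\<And>j. j \<in> {1..d} \<Longrightarrow> \<exists>c. \<forall>x\<in>Dsimplex (k j). \<bar>\<phi> j x\<bar> \<le> c"
    and \<psi>_meas: "\<And>j. j \<in> {1..d} \<Longrightarrow>
        \<psi> j \<in> borel_measurable (restrict_space (PiM {1..k j} (\<lambda>_. borel)) (cube (k j)))"
    and \<psi>_bdd: "\<And>j. j \<in> {1..d} \<Longrightarrow> \<exists>c. \<forall>x\<in>cube (k j). \<bar>\<psi> j x\<bar> \<le> c"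
    and \<kappa>: "graphon \<kappa>"
    and M: "\<And>n. n \<ge> 1 \<Longrightarrow> prob_space (M n)"
    and U_meas: "\<And>n v. n \<ge> 1 \<Longrightarrow> v \<in> {1..n} \<Longrightarrow> U n v \<in> borel_measurable (M n)"
    and U_range: "\<And>n v \<omega>. n \<ge> 1 \<Longrightarrow> v \<in> {1..n} \<Longrightarrow> \<omega> \<in> space (M n) \<Longrightarrow> U n v \<omega> \<in> {0..1}"
    and U_indep: "\<And>n. n \<ge> 1 \<Longrightarrow> prob_space.indep_vars (M n) (\<lambda>_. borel) (U n) {1..n}"
    and Y_meas: "\<And>n v w. n \<ge> 1 \<Longrightarrow> 1 \<le> v \<Longrightarrow> v < w \<Longrightarrow> w \<le> n \<Longrightarrow>
        Y n v w \<in> borel_measurable (M n)"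
    and Y_bdd: "\<And>n v w \<omega>. n \<ge> 1 \<Longrightarrow> 1 \<le> v \<Longrightarrow> v < w \<Longrightarrow> w \<le> n \<Longrightarrow>
        \<omega> \<in> space (M n) \<Longrightarrow> \<bar>Y n v w \<omega>\<bar> \<le> B"
    and Y_condexp: "\<And>n v w. n \<ge> 1 \<Longrightarrow> 1 \<le> v \<Longrightarrow> v < w \<Longrightarrow> w \<le> n \<Longrightarrow>
        AE \<omega> in M n. real_cond_exp (M n) (sigmaU (M n) n (U n)) (Y n v w) \<omega>
                       = \<kappa> (U n v \<omega>) (U n w \<omega>)"
    and Y_condindep: "\<And>n. n \<ge> 1 \<Longrightarrow>
        cond_indep_vars (M n) (sigmaU (M n) n (U n)) (\<lambda>(v, w). Y n v w)
          {(v, w). 1 \<le> v \<and> v < w \<and> w \<le> n}"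
    and m: "m \<ge> 2"
    and i: "i \<in> {1..d}"
    and ii: "\<And>l. l \<in> {1..m} \<Longrightarrow> ii l \<in> {1..d}"
  shows "\<exists>C>0. \<forall>n\<ge>1.
    \<bar>\<integral>\<omega>. (\<Sum>a\<in>Iset n (k i). \<Sum>bs\<in>PiE {1..m} (\<lambda>l. Nset n (k i) (k (ii l)) a).
        Xterm (M n) n (k i) (F i) (\<phi> i) (\<psi> i) \<kappa> (U n) (Y n) a \<omega> *
        (\<Prod>l\<in>{1..m}. Xterm (M n) n (k (ii l)) (F (ii l)) (\<phi> (ii l)) (\<psi> (ii l)) \<kappa> (U n) (Y n) (bs l) \<omega>))
      \<partial>(M n)\<bar> \<le> C * real n powr (- (real m - 1) / 2)"
proof -
  obtain c\<phi> where c\<phi>: "\<forall>j\<in>{1..d}. \<forall>x\<in>Dsimplex (k j). \<bar>\<phi> j x\<bar> \<le> c\<phi> j"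
    using bchoice[of "{1..d}" "\<lambda>j c. \<forall>x\<in>Dsimplex (k j). \<bar>\<phi> j x\<bar> \<le> c"] \<phi>_bdd by blast
  obtain c\<psi> where c\<psi>: "\<forall>j\<in>{1..d}. \<forall>x\<in>cube (k j). \<bar>\<psi> j x\<bar> \<le> c\<psi> j"
    using bchoice[of "{1..d}" "\<lambda>j c. \<forall>x\<in>cube (k j). \<bar>\<psi> j x\<bar> \<le> c"] \<psi>_bdd by blast
  define idx where "idx = (\<lambda>f. if f = 0 then i else ii f)"
  define S where "S = (\<Sum>f\<in>{0..m}. k (idx f))"
  define C where "C = real (((S + 1 - m) div 2 + 1) * ((S + 1 - m) div 2) ^ S) *
    (\<Prod>f\<in>{0..m}. factor_bound B (k (idx f)) (c\<phi> (idx f)) (c\<psi> (idx f)))"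
  have bound: "\<bar>\<integral>\<omega>. (\<Sum>a\<in>Iset n (k i). \<Sum>bs\<in>PiE {1..m} (\<lambda>l. Nset n (k i) (k (ii l)) a).
        Xterm (M n) n (k i) (F i) (\<phi> i) (\<psi> i) \<kappa> (U n) (Y n) a \<omega> *
        (\<Prod>l\<in>{1..m}. Xterm (M n) n (k (ii l)) (F (ii l)) (\<phi> (ii l)) (\<psi> (ii l)) \<kappa> (U n) (Y n) (bs l) \<omega>))
      \<partial>(M n)\<bar> \<le> C * real n powr (- (real m - 1) / 2)" if n: "1 \<le> n" for n
  proof -
    interpret graphon_sample "M n" n "U n" "Y n" \<kappa> B
      using M[OF n] \<kappa> U_meas[OF n] U_range[OF n] Y_meas[OF n] Y_bdd[OF n] Y_condexp[OF n] Y_condindep[OF n]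
      by (simp add: graphon_sample_def graphon_sample_axioms_def)
    show ?thesis
      unfolding C_def S_def idx_def
      by (rule abs_integral_star_sum_le[OF n _ i ii k F \<psi>_meas]) (use m c\<phi> c\<psi> in auto)
  qed
  have "C * real n powr (- (real m - 1) / 2) \<le> (\<bar>C\<bar> + 1) * real n powr (- (real m - 1) / 2)" for n
    by (intro mult_right_mono) auto
  then show ?thesis using bound by (intro exI[of _ "\<bar>C\<bar> + 1"]) (auto intro: order_trans)
qed

end
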